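(* Let $(\mathbf{w},\mathbf{u},q)$ be a sufficiently smooth solution of the GePUP-E formulation (described in the context) on $\Omega\times[t_0,\infty)$ with the initial condition $\mathbf{w}(\mathbf{x},t_0)=\mathbf{u}(\mathbf{x},t_0)$ for all $\mathbf{x}\in\overline{\Omega}$. Then the GePUP-E formulation recovers the incompressible Navier–Stokes equations for all $t\ge t_0$: namely $\mathbf{w}=\mathbf{u}$ for all $t\ge t_0$, and $(\mathbf{u},p)$ with $p=q$ satisfies $\partial_t\mathbf{u}+\mathbf{u}\cdot\nabla\mathbf{u}=\mathbf{g}-\nabla p+\nu\Delta\mathbf{u}$ in $\Omega$, $\nabla\cdot\mathbf{u}=0$ in $\Omega$, $\mathbf{u}=\mathbf{0}$ on $\partial\Omega$.
   Context: $\Omega\subset\mathbb{R}^D$ is a bounded connected open set with sufficiently smooth boundary, unit outward normal $\mathbf{n}$ and unit tangent vector(s) $\boldsymbol{\tau}$ on $\partial\Omega$. $\nu>0$ is the kinematic viscosity, $\mathbf{g}$ a given body force, $\lambda\ge 0$ a penalty parameter. The Leray–Helmholtz projection $\mathscr{P}$ maps a $C^1$ vector field $\mathbf{v}^*$ to $\mathbf{v}^*-\nabla\phi$ where $\Delta\phi=\nabla\cdot\mathbf{v}^*$ in $\Omega$ and $\mathbf{n}\cdot\nabla\phi=\mathbf{n}\cdot\mathbf{v}^*$ on $\partial\Omega$ (so $\mathscr{P}\mathbf{v}^*$ is divergence-free with zero normal component). The GePUP-E formulation is the system for $(\mathbf{w},\mathbf{u},q)$: $\partial_t\mathbf{w}=\mathbf{g}-\mathbf{u}\cdot\nabla\mathbf{u}-\nabla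 q+\nu\Delta\mathbf{w}$ in $\Omega$; $\mathbf{w}\cdot\boldsymbol{\tau}=0$ and $\nabla\cdot\mathbf{w}=0$ on $\partial\Omega$; $\mathbf{u}=\mathscr{P}\mathbf{w}$ in $\Omega$, $\mathbf{u}\cdot\mathbf{n}=0$ on $\partial\Omega$; $\Delta q=\nabla\cdot(\mathbf{g}-\mathbf{u}\cdot\nabla\mathbf{u})$ in $\Omega$; $\mathbf{n}\cdot\nabla q=\mathbf{n}\cdot(\mathbf{g}-\mathbf{u}\cdot\nabla\mathbf{u}+\nu\Delta\mathbf{w})+\lambda\,\mathbf{n}\cdot\mathbf{w}$ on $\partial\Omega$. *)

theory Defs
  imports "HOL-Analysis.Analysis"
begin

fun dds :: "'a::real_normed_vector list \<Rightarrow> ('a \<Rightarrow> 'b::real_normed_vector) \<Rightarrow> 'a \<Rightarrow> 'b" where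
  "dds [] f = f"
| "dds (v # vs) f = (\<lambda>x. frechet_derivative (dds vs f) (at x) v)"

definition Ck_on :: "nat \<Rightarrow> 'a::real_normed_vector set \<Rightarrow> ('a \<Rightarrow> 'b::real_normed_vector) \<Rightarrow> bool" where
  "Ck_on k S f \<longleftrightarrow>
     (\<forall>vs. length vs < k \<longrightarrow> dds vs f differentiable_on S) \<and>
     (\<forall>vs. length vs = k \<longrightarrow> continuous_on S (dds vs f))"

definition smooth_on :: "'a::real_normed_vector set \<Rightarrow> ('a \<Rightarrow> 'b::real_normed_vector) \<Rightarrow> bool" where
  "smooth_on S f \<longleftrightarrow> (\<forall>k. Ck_on k S f)"

definition grad :: "('a::euclidean_space \<Rightarrow> real) \<Rightarrow> 'a \<Rightarrow> 'a" where
  "grad f x = (\<Sum>b\<in>Basis. frechet_derivative f (at x) b *\<^sub>R b)"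

definition dvg :: "('a::euclidean_space \<Rightarrow> 'a) \<Rightarrow> 'a \<Rightarrow> real" where
  "dvg v x = (\<Sum>b\<in>Basis. frechet_derivative v (at x) b \<bullet> b)"

definition lap :: "('a::euclidean_space \<Rightarrow> 'b::real_normed_vector) \<Rightarrow> 'a \<Rightarrow> 'b" where
  "lap f x = (\<Sum>b\<in>Basis. frechet_derivative (\<lambda>y. frechet_derivative f (at y) b) (at x) b)"

definition advect :: "('a::euclidean_space \<Rightarrow> 'a) \<Rightarrow> ('a \<Rightarrow> 'b::real_normed_vector) \<Rightarrow> 'a \<Rightarrow> 'b" where
  "advect u v x = frechet_derivative v (at x) (u x)"

definition tderiv :: "('a \<Rightarrow> real \<Rightarrow> 'b::real_normed_vector) \<Rightarrow> 'a \<Rightarrow> real \<Rightarrow> 'b" where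
  "tderiv f x t = vector_derivative (\<lambda>s. f x s) (at t)"

text \<open>Bounded connected open domain with smooth boundary, given by a smooth
  defining function rho: Omega = {rho < 0}, grad rho nonzero on {rho = 0}.\<close>
definition smooth_domain :: "'a::euclidean_space set \<Rightarrow> ('a \<Rightarrow> real) \<Rightarrow> bool" where
  "smooth_domain \<Omega> \<rho> \<longleftrightarrow> bounded \<Omega> \<and> connected \<Omega> \<and> \<Omega> = {x. \<rho> x < 0} \<and>
     smooth_on UNIV \<rho> \<and> (\<forall>x. \<rho> x = 0 \<longrightarrow> grad \<rho> x \<noteq> 0)"

definition outward_normal :: "('a::euclidean_space \<Rightarrow> real) \<Rightarrow> 'a \<Rightarrow> 'a" where
  "outward_normal \<rho> x = (1 / norm (grad \<rho> x)) *\<^sub>R grad \<rho> x"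

definition leray_proj :: "'a::euclidean_space set \<Rightarrow> ('a \<Rightarrow> 'a) \<Rightarrow> ('a \<Rightarrow> 'a) \<Rightarrow> ('a \<Rightarrow> 'a) \<Rightarrow> bool" where
  "leray_proj \<Omega> n v P \<longleftrightarrow>
    (\<exists>\<phi> :: 'a \<Rightarrow> real. \<exists>V. open V \<and> closure \<Omega> \<subseteq> V \<and> Ck_on 2 V \<phi> \<and>
       (\<forall>x\<in>\<Omega>. lap \<phi> x = dvg v x) \<and>
       (\<forall>x\<in>frontier \<Omega>. n x \<bullet> grad \<phi> x = n x \<bullet> v x) \<and>
       (\<forall>x\<in>\<Omega>. P x = v x - grad \<phi> x))"

end

theory Submission
  imports Defs
begin

(* Let d = div w. Taking the divergence of the evolution equation for w, the pressure equation
   cancels div (g - u.grad u), so d solves the heat equation d_t = nu Lap d in Omega; d vanishes on the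
   boundary by the boundary condition on w, and at t0 because w = u there and u is divergence free.
   By the weak maximum principle d = 0. On the boundary, the Neumann condition for q turns the normal
   component of the evolution equation into (n.w)_t = - lam (n.w), and n.w = n.u = 0 at t0, so n.w = 0
   for all times. Hence the potential phi of the Leray projection u = w - grad phi is harmonic with
   homogeneous Neumann data, and Hopf's lemma together with the strong maximum principle give
   grad phi = 0, i.e. w = u. The Navier-Stokes equations follow, and u = w vanishes on the boundary
   because w is normal to it and n.w = 0. *)

lemma frechet_derivative_eqI:
  "(f has_derivative D) (at x) \<Longrightarrow> frechet_derivative f (at x) v = D v"
  by (metis frechet_derivative_at)

lemma has_derivative_frechet_derivative:
  "f differentiable (at x) \<Longrightarrow> (f has_derivative frechet_derivative f (at x)) (at x)"
  using frechet_derivative_works by blast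

lemma frechet_derivative_transform_open:
  assumes "open S" "x \<in> S" "\<And>y. y \<in> S \<Longrightarrow> f y = g y"
  shows "frechet_derivative f (at x) = frechet_derivative g (at x)"
proof -
  have "(f has_derivative D) (at x) \<longleftrightarrow> (g has_derivative D) (at x)" for D
    using has_derivative_transform_within_open[OF _ assms(1,2)] assms(3) by metis
  then show ?thesis unfolding frechet_derivative_def by simp
qed

lemma differentiable_transform_open:
  assumes "open S" "x \<in> S" "\<And>y. y \<in> S \<Longrightarrow> f y = g y" "g differentiable (at x)"
  shows "f differentiable (at x)"
  using assms has_derivative_transform_within_open unfolding differentiable_def by metis

lemma frechet_derivative_sum:
  assumes "finite I" "\<And>i. i \<in> I \<Longrightarrow> f i differentiable (at x)"
  shows "frechet_derivative (\<lambda>y. \<Sum>i\<in>I. f i y) (at x) v = (\<Sum>i\<in>I. frechet_derivative (f i) (at x) v)"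
  using assms(2)
  by (intro frechet_derivative_eqI has_derivative_sum) (simp add: has_derivative_frechet_derivative)

lemma frechet_derivative_inner_left:
  assumes "f differentiable (at x)"
  shows "frechet_derivative (\<lambda>y. f y \<bullet> c) (at x) v = frechet_derivative f (at x) v \<bullet> c"
  using has_derivative_frechet_derivative[OF assms]
  by (intro frechet_derivative_eqI) (auto intro!: derivative_eq_intros)

lemma has_vector_derivative_along_line:
  assumes "f differentiable (at (x + s *\<^sub>R v))"
  shows "((\<lambda>s. f (x + s *\<^sub>R v)) has_vector_derivative frechet_derivative f (at (x + s *\<^sub>R v)) v) (at s)"
proof -
  have "((\<lambda>s. x + s *\<^sub>R v) has_derivative (\<lambda>r. r *\<^sub>R v)) (at s)"
    by (auto intro!: derivative_eq_intros)
  from has_derivative_compose[OF this has_derivative_frechet_derivative[OF assms]]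
  show ?thesis
    using linear_scale[OF linear_frechet_derivative[OF assms]] unfolding has_vector_derivative_def by simp
qed

lemma has_real_derivative_along_line:
  fixes f :: "'a::real_normed_vector \<Rightarrow> real"
  assumes "f differentiable (at (x + s *\<^sub>R v))"
  shows "((\<lambda>s. f (x + s *\<^sub>R v)) has_real_derivative frechet_derivative f (at (x + s *\<^sub>R v)) v) (at s)"
  using has_vector_derivative_along_line[OF assms] has_real_derivative_iff_has_vector_derivative by blast

lemma DERIV_second_nonpos_at_local_max:
  fixes f f' :: "real \<Rightarrow> real"
  assumes "\<delta> > 0" and f': "\<And>s. \<bar>s\<bar> < \<delta> \<Longrightarrow> (f has_real_derivative f' s) (at s)"
    and f'': "(f' has_real_derivative L) (at 0)" and max: "\<And>s. \<bar>s\<bar> < \<delta> \<Longrightarrow> f s \<le> f 0"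
  shows "L \<le> 0"
proof (rule ccontr)
  assume "\<not> L \<le> 0"
  then obtain d where d: "d > 0" "\<And>h. 0 < h \<Longrightarrow> h < d \<Longrightarrow> f' 0 < f' (0 + h)"
    using DERIV_pos_inc_right[OF f''] by auto
  have "f' 0 = 0"
    by (rule DERIV_local_max[OF f'[of 0] \<open>\<delta> > 0\<close>]) (use \<open>\<delta> > 0\<close> max in auto)
  define s where "s = min d \<delta> / 2"
  have s: "0 < s" "s < d" "s < \<delta>" using d \<open>\<delta> > 0\<close> unfolding s_def by auto
  obtain z where z: "0 < z" "z < s" "f s - f 0 = (s - 0) * f' z"
    using MVT2[OF s(1), of f f'] f' s by (auto simp: abs_le_iff)
  have "0 < s * f' z" using d(2)[of z] \<open>f' 0 = 0\<close> z s by simp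
  then show False using z max[of s] s by simp
qed

lemma frechet_derivative_nonpos_at_ray_max:
  fixes f :: "'a::real_normed_vector \<Rightarrow> real"
  assumes "f differentiable (at x)" "\<delta> > 0" "\<And>s. 0 < s \<Longrightarrow> s < \<delta> \<Longrightarrow> f (x + s *\<^sub>R v) \<le> f x"
  shows "frechet_derivative f (at x) v \<le> 0"
proof (rule ccontr)
  have "((\<lambda>s. f (x + s *\<^sub>R v)) has_real_derivative frechet_derivative f (at x) v) (at 0)"
    using has_real_derivative_along_line[of f x 0 v] assms(1) by simp
  moreover assume "\<not> ?thesis"
  ultimately obtain d where d: "d > 0" "\<And>h. 0 < h \<Longrightarrow> h < d \<Longrightarrow> f (x + 0 *\<^sub>R v) < f (x + (0 + h) *\<^sub>R v)"
    using DERIV_pos_inc_right[of "\<lambda>s. f (x + s *\<^sub>R v)"] by (metis not_le)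
  define s where "s = min d \<delta> / 2"
  have "0 < s" "s < d" "s < \<delta>" using d \<open>\<delta> > 0\<close> unfolding s_def by auto
  then show False using d(2)[of s] assms(3)[of s] by simp
qed

lemma second_frechet_derivative_nonpos_at_local_max:
  fixes f :: "'a::real_normed_vector \<Rightarrow> real"
  assumes "\<delta> > 0" "\<And>y. y \<in> ball x \<delta> \<Longrightarrow> f differentiable (at y)"
    and "(\<lambda>y. frechet_derivative f (at y) c) differentiable (at x)"
    and "\<And>y. y \<in> ball x \<delta> \<Longrightarrow> f y \<le> f x"
  shows "frechet_derivative (\<lambda>y. frechet_derivative f (at y) c) (at x) c \<le> 0"
proof -
  define \<delta>' where "\<delta>' = \<delta> / (norm c + 1)"
  have "norm c + 1 > 0" by (simp add: add_nonneg_pos)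
  then have "\<delta>' > 0" "\<delta>' * (norm c + 1) = \<delta>"
    using assms(1) unfolding \<delta>'_def by auto
  have line: "x + s *\<^sub>R c \<in> ball x \<delta>" if "\<bar>s\<bar> < \<delta>'" for s
  proof -
    have "\<bar>s\<bar> * norm c \<le> \<delta>' * norm c" using that by (simp add: mult_right_mono)
    also have "\<dots> < \<delta>" using \<open>\<delta>' > 0\<close> \<open>\<delta>' * (norm c + 1) = \<delta>\<close> by (simp add: algebra_simps)
    finally show ?thesis by (simp add: dist_norm)
  qed
  show ?thesis
  proof (rule DERIV_second_nonpos_at_local_max[OF \<open>\<delta>' > 0\<close>])
    show "((\<lambda>s. f (x + s *\<^sub>R c)) has_real_derivative frechet_derivative f (at (x + s *\<^sub>R c)) c) (at s)"
      if "\<bar>s\<bar> < \<delta>'" for s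
      using has_real_derivative_along_line assms(2) line[OF that] by blast
    show "((\<lambda>s. frechet_derivative f (at (x + s *\<^sub>R c)) c) has_real_derivative
        frechet_derivative (\<lambda>y. frechet_derivative f (at y) c) (at x) c) (at 0)"
      using has_real_derivative_along_line[of _ x 0 c] assms(3) by simp
    show "f (x + s *\<^sub>R c) \<le> f (x + 0 *\<^sub>R c)" if "\<bar>s\<bar> < \<delta>'" for s
      using assms(4) line[OF that] by simp
  qed
qed

lemma linear_ode_zero:
  fixes f :: "real \<Rightarrow> real"
  assumes "\<And>s. s \<ge> t0 \<Longrightarrow> (f has_real_derivative c * f s) (at s)" "f t0 = 0" "t \<ge> t0"
  shows "f t = 0"
proof -
  have d0: "((\<lambda>s. exp (- c * s) * f s) has_real_derivative 0) (at s within {t0..})" if "s \<in> {t0..}" for s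
  proof -
    have "((\<lambda>s. exp (- c * s)) has_real_derivative exp (- c * s) * - c) (at s)"
      by (auto intro!: derivative_eq_intros)
    then have "((\<lambda>s. exp (- c * s) * f s) has_real_derivative
        exp (- c * s) * - c * f s + c * f s * exp (- c * s)) (at s)"
      by (rule DERIV_mult) (use assms(1) that in simp)
    moreover have "exp (- c * s) * - c * f s + c * f s * exp (- c * s) = 0"
      by (simp add: algebra_simps)
    ultimately have "((\<lambda>s. exp (- c * s) * f s) has_real_derivative 0) (at s)" by simp
    then show ?thesis by (rule has_field_derivative_at_within)
  qed
  obtain k where k: "\<forall>s\<in>{t0..}. exp (- c * s) * f s = k"
    using has_field_derivative_zero_constant[OF convex_real_interval(1) d0] by blast
  have "exp (- c * t) * f t = exp (- c * t0) * f t0" using k assms(3) by simp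
  then show ?thesis using assms(2) by simp
qed

lemma continuous_on_closure_eq:
  fixes f g :: "'a::topological_space \<Rightarrow> 'b::real_normed_vector"
  assumes "continuous_on (closure S) f" "continuous_on (closure S) g"
    and "\<And>y. y \<in> S \<Longrightarrow> f y = g y" "x \<in> closure S"
  shows "f x = g x"
proof -
  have "continuous_on (closure S) (\<lambda>y. f y - g y)"
    using assms(1,2) by (rule continuous_on_diff)
  moreover have "f y - g y = 0" if "y \<in> S" for y
    using assms(3)[OF that] by simp
  ultimately have "f x - g x = 0"
    by (rule continuous_constant_on_closure[OF _ _ assms(4)])
  then show ?thesis by simp
qed

lemma vector_derivative_unique_on_halfline:
  fixes f g :: "real \<Rightarrow> 'a::real_normed_vector"
  assumes "(f has_vector_derivative f') (at t)" "(g has_vector_derivative g') (at t)"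
    and "\<And>s. s \<ge> t0 \<Longrightarrow> f s = g s" "t \<ge> t0"
  shows "f' = g'"
proof -
  have "at t within {t0..} \<noteq> bot"
  proof
    assume "at t within {t0..} = bot"
    moreover have "at_right t \<le> at t within {t0..}"
      unfolding at_within_Ici_at_right[of t, symmetric] by (rule at_le) (use assms(4) in auto)
    ultimately show False using trivial_limit_at_right_real[of t] by (simp add: bot_unique)
  qed
  moreover have "(f has_vector_derivative g') (at t within {t0..})"
    using assms(3,4) has_vector_derivative_at_within[OF assms(2)]
    by (intro has_vector_derivative_transform[of t "{t0..}" f g g']) auto
  ultimately show ?thesis
    using vector_derivative_unique_within has_vector_derivative_at_within[OF assms(1)] by blast
qed

lemma dds_append: "dds vs (dds ws f) = dds (vs @ ws) f"
  by (induction vs) simp_all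

lemma dds_cong_open:
  assumes "open S" "\<And>y. y \<in> S \<Longrightarrow> f y = g y" "z \<in> S"
  shows "dds vs f z = dds vs g z"
  using assms(3)
proof (induction vs arbitrary: z)
  case (Cons v vs)
  then show ?case
    using frechet_derivative_transform_open[OF assms(1) Cons.prems Cons.IH] by simp
qed (use assms(2) in simp)

lemma smooth_on_iff_differentiable_on:
  "smooth_on S f \<longleftrightarrow> (\<forall>vs. dds vs f differentiable_on S)"
proof
  assume "smooth_on S f"
  then have "Ck_on (Suc (length vs)) S f" for vs unfolding smooth_on_def by blast
  then show "\<forall>vs. dds vs f differentiable_on S" unfolding Ck_on_def by auto
qed (auto simp: smooth_on_def Ck_on_def differentiable_imp_continuous_on)

lemma smooth_on_openI:
  assumes "open S" "\<And>vs z. z \<in> S \<Longrightarrow> dds vs f differentiable (at z)"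
  shows "smooth_on S f"
  using assms by (simp add: smooth_on_iff_differentiable_on differentiable_on_eq_differentiable_at)

lemma smooth_on_dds_differentiable:
  assumes "smooth_on S f" "open S" "z \<in> S"
  shows "dds vs f differentiable (at z)"
  using assms by (simp add: smooth_on_iff_differentiable_on differentiable_on_eq_differentiable_at)

lemma smooth_on_dds_continuous: "smooth_on S f \<Longrightarrow> continuous_on S (dds vs f)"
  by (simp add: smooth_on_iff_differentiable_on differentiable_imp_continuous_on)

lemma smooth_on_differentiable: "smooth_on S f \<Longrightarrow> open S \<Longrightarrow> x \<in> S \<Longrightarrow> f differentiable (at x)"
  using smooth_on_dds_differentiable[of S f x "[]"] by simp

lemma smooth_on_continuous: "smooth_on S f \<Longrightarrow> continuous_on S f"
  using smooth_on_dds_continuous[of S f "[]"] by simp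

lemma smooth_on_dds: "smooth_on S f \<Longrightarrow> smooth_on S (dds ws f)"
  by (simp add: smooth_on_iff_differentiable_on dds_append)

lemma smooth_on_cong:
  assumes "open S" "\<And>y. y \<in> S \<Longrightarrow> f y = g y" "smooth_on S f"
  shows "smooth_on S g"
proof (rule smooth_on_openI[OF assms(1)])
  fix vs z assume "z \<in> S"
  show "dds vs g differentiable (at z)"
    by (rule differentiable_transform_open[OF assms(1) \<open>z \<in> S\<close>, of _ "dds vs f"])
      (use dds_cong_open[OF assms(1,2)] smooth_on_dds_differentiable[OF assms(3,1) \<open>z \<in> S\<close>] in auto)
qed

lemma dds_sum:
  assumes "finite I" "open S" "\<And>i. i \<in> I \<Longrightarrow> smooth_on S (f i)" "z \<in> S"
  shows "dds vs (\<lambda>y. \<Sum>i\<in>I. f i y) z = (\<Sum>i\<in>I. dds vs (f i) z)"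
  using assms(4)
proof (induction vs arbitrary: z)
  case (Cons v vs)
  have "dds (v # vs) (\<lambda>y. \<Sum>i\<in>I. f i y) z = frechet_derivative (\<lambda>y. \<Sum>i\<in>I. dds vs (f i) y) (at z) v"
    using frechet_derivative_transform_open[OF assms(2) Cons.prems Cons.IH] by simp
  also have "\<dots> = (\<Sum>i\<in>I. dds (v # vs) (f i) z)"
    using smooth_on_dds_differentiable[OF assms(3) assms(2) Cons.prems]
    by (simp add: frechet_derivative_sum[OF assms(1)])
  finally show ?case .
qed simp

lemma smooth_on_sum:
  assumes "finite I" "open S" "\<And>i. i \<in> I \<Longrightarrow> smooth_on S (f i)"
  shows "smooth_on S (\<lambda>y. \<Sum>i\<in>I. f i y)"
proof (rule smooth_on_openI[OF assms(2)])
  fix vs z assume "z \<in> S"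
  have "(\<lambda>y. \<Sum>i\<in>I. dds vs (f i) y) differentiable (at z)"
    using smooth_on_dds_differentiable[OF assms(3) assms(2) \<open>z \<in> S\<close>] assms(1) by simp
  then show "dds vs (\<lambda>y. \<Sum>i\<in>I. f i y) differentiable (at z)"
    by (rule differentiable_transform_open[OF assms(2) \<open>z \<in> S\<close>, rotated]) (simp add: dds_sum[OF assms])
qed

lemma dds_bounded_linear:
  assumes "bounded_linear L" "smooth_on S f" "open S" "z \<in> S"
  shows "dds vs (\<lambda>y. L (f y)) z = L (dds vs f z)"
  using assms(4)
proof (induction vs arbitrary: z)
  case (Cons v vs)
  have "((\<lambda>y. L (dds vs f y)) has_derivative (\<lambda>h. L (frechet_derivative (dds vs f) (at z) h))) (at z)"
    using bounded_linear.has_derivative[OF assms(1) has_derivative_frechet_derivative,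
        OF smooth_on_dds_differentiable[OF assms(2,3) Cons.prems]] .
  then show ?case
    using frechet_derivative_transform_open[OF assms(3) Cons.prems Cons.IH]
    by (simp add: frechet_derivative_eqI)
qed simp

lemma smooth_on_bounded_linear:
  assumes "bounded_linear L" "smooth_on S f" "open S"
  shows "smooth_on S (\<lambda>y. L (f y))"
proof (rule smooth_on_openI[OF assms(3)])
  fix vs z assume "z \<in> S"
  have "(\<lambda>y. L (dds vs f y)) differentiable (at z)"
    using bounded_linear.has_derivative[OF assms(1) has_derivative_frechet_derivative,
        OF smooth_on_dds_differentiable[OF assms(2,3) \<open>z \<in> S\<close>]]
    unfolding differentiable_def by blast
  then show "dds vs (\<lambda>y. L (f y)) differentiable (at z)"
    by (rule differentiable_transform_open[OF assms(3) \<open>z \<in> S\<close>, rotated])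
      (simp add: dds_bounded_linear[OF assms])
qed

lemma dds_inner_left:
  fixes F :: "'a::real_normed_vector \<Rightarrow> 'b::real_inner"
  assumes "smooth_on S F" "open S" "z \<in> S"
  shows "dds vs (\<lambda>y. F y \<bullet> c) z = dds vs F z \<bullet> c"
  by (rule dds_bounded_linear[OF bounded_linear_inner_left assms])

lemma smooth_on_inner_left:
  fixes F :: "'a::real_normed_vector \<Rightarrow> 'b::real_inner"
  assumes "smooth_on S F" "open S"
  shows "smooth_on S (\<lambda>y. F y \<bullet> c)"
  by (rule smooth_on_bounded_linear[OF bounded_linear_inner_left assms])

lemma second_difference_mean_value:
  fixes f :: "'a::real_normed_vector \<Rightarrow> real"
  assumes h: "h > 0"
    and S: "\<And>s \<tau>. 0 \<le> s \<Longrightarrow> s \<le> h \<Longrightarrow> 0 \<le> \<tau> \<Longrightarrow> \<tau> \<le> h \<Longrightarrow> x + s *\<^sub>R a + \<tau> *\<^sub>R b \<in> S"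
    and df: "\<And>y. y \<in> S \<Longrightarrow> f differentiable (at y)"
    and da: "\<And>y. y \<in> S \<Longrightarrow> (\<lambda>y. frechet_derivative f (at y) a) differentiable (at y)"
  shows "\<exists>s \<tau>. 0 < s \<and> s < h \<and> 0 < \<tau> \<and> \<tau> < h \<and>
    f (x + h *\<^sub>R a + h *\<^sub>R b) - f (x + h *\<^sub>R a) - f (x + h *\<^sub>R b) + f x =
    h * h * frechet_derivative (\<lambda>y. frechet_derivative f (at y) a) (at (x + s *\<^sub>R a + \<tau> *\<^sub>R b)) b"
proof -
  define g where "g s = f ((x + h *\<^sub>R b) + s *\<^sub>R a) - f (x + s *\<^sub>R a)" for s
  have g': "DERIV g s :> (frechet_derivative f (at ((x + h *\<^sub>R b) + s *\<^sub>R a)) a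
        - frechet_derivative f (at (x + s *\<^sub>R a)) a)" if "0 \<le> s" "s \<le> h" for s
  proof -
    have m1: "(x + h *\<^sub>R b) + s *\<^sub>R a \<in> S"
      using S[of s h] that h by (simp add: algebra_simps)
    have m2: "x + s *\<^sub>R a \<in> S"
      using S[of s 0] that h by simp
    show ?thesis unfolding g_def
      by (intro DERIV_diff has_real_derivative_along_line df m1 m2)
  qed
  obtain s1 where s1: "0 < s1" "s1 < h"
    and e1: "g h - g 0 = (h - 0) * (frechet_derivative f (at ((x + h *\<^sub>R b) + s1 *\<^sub>R a)) a
        - frechet_derivative f (at (x + s1 *\<^sub>R a)) a)"
    using MVT2[OF h g'] by auto
  define k where "k \<tau> = frechet_derivative f (at ((x + s1 *\<^sub>R a) + \<tau> *\<^sub>R b)) a" for \<tau>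
  have k': "DERIV k \<tau> :> frechet_derivative (\<lambda>y. frechet_derivative f (at y) a) (at ((x + s1 *\<^sub>R a) + \<tau> *\<^sub>R b)) b"
    if "0 \<le> \<tau>" "\<tau> \<le> h" for \<tau>
  proof -
    have m: "(x + s1 *\<^sub>R a) + \<tau> *\<^sub>R b \<in> S"
      using S[of s1 \<tau>] that s1 by simp
    show ?thesis unfolding k_def
      using has_real_derivative_along_line[of "\<lambda>y. frechet_derivative f (at y) a" "x + s1 *\<^sub>R a" \<tau> b] da[OF m] by simp
  qed
  obtain \<tau>1 where t1: "0 < \<tau>1" "\<tau>1 < h"
    and e2: "k h - k 0 = (h - 0) * frechet_derivative (\<lambda>y. frechet_derivative f (at y) a) (at ((x + s1 *\<^sub>R a) + \<tau>1 *\<^sub>R b)) b"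
    using MVT2[OF h k'] by auto
  have "k h = frechet_derivative f (at ((x + h *\<^sub>R b) + s1 *\<^sub>R a)) a"
    unfolding k_def by (simp add: algebra_simps)
  moreover have "k 0 = frechet_derivative f (at (x + s1 *\<^sub>R a)) a"
    unfolding k_def by simp
  ultimately have "g h - g 0 = h * (h * frechet_derivative (\<lambda>y. frechet_derivative f (at y) a) (at ((x + s1 *\<^sub>R a) + \<tau>1 *\<^sub>R b)) b)"
    using e1 e2 by simp
  moreover have "g h - g 0 = f (x + h *\<^sub>R a + h *\<^sub>R b) - f (x + h *\<^sub>R a) - f (x + h *\<^sub>R b) + f x"
    unfolding g_def by (simp add: algebra_simps)
  ultimately show ?thesis using s1 t1
    by (intro exI[of _ s1] exI[of _ \<tau>1]) simp
qed

lemma small_parallelogram: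
  fixes x a b :: "'a::real_normed_vector"
  assumes "e > 0"
  obtains h where "h > 0"
    "\<And>s \<tau>. 0 \<le> s \<Longrightarrow> s \<le> h \<Longrightarrow> 0 \<le> \<tau> \<Longrightarrow> \<tau> \<le> h \<Longrightarrow> dist (x + s *\<^sub>R a + \<tau> *\<^sub>R b) x < e"
proof -
  define h where "h = e / (2 * (norm a + norm b + 1))"
  have p: "2 * (norm a + norm b + 1) > 0" by (smt (verit) norm_ge_zero)
  then have "h > 0" using assms unfolding h_def by simp
  moreover have "dist (x + s *\<^sub>R a + \<tau> *\<^sub>R b) x < e"
    if "0 \<le> s" "s \<le> h" "0 \<le> \<tau>" "\<tau> \<le> h" for s \<tau>
  proof -
    have "dist (x + s *\<^sub>R a + \<tau> *\<^sub>R b) x \<le> s * norm a + \<tau> * norm b"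
      using that norm_triangle_ineq[of "s *\<^sub>R a" "\<tau> *\<^sub>R b"] by (simp add: dist_norm add.assoc)
    also have "\<dots> \<le> h * (norm a + norm b)"
      using that by (simp add: distrib_left add_mono mult_right_mono)
    also have "\<dots> < h * (2 * (norm a + norm b + 1))"
      using \<open>h > 0\<close> by (intro mult_strict_left_mono) (smt (verit) norm_ge_zero)+
    also have "\<dots> = e" unfolding h_def using p by simp
    finally show ?thesis .
  qed
  ultimately show ?thesis using that by blast
qed

lemma frechet_derivative_second_symmetric:
  fixes f :: "'a::real_normed_vector \<Rightarrow> real"
  assumes S: "open S" "x \<in> S"
    and df: "\<And>y. y \<in> S \<Longrightarrow> f differentiable (at y)"
    and da: "\<And>y. y \<in> S \<Longrightarrow> (\<lambda>y. frechet_derivative f (at y) a) differentiable (at y)"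
    and db: "\<And>y. y \<in> S \<Longrightarrow> (\<lambda>y. frechet_derivative f (at y) b) differentiable (at y)"
    and ca: "continuous_on S (\<lambda>y. frechet_derivative (\<lambda>y. frechet_derivative f (at y) a) (at y) b)"
    and cb: "continuous_on S (\<lambda>y. frechet_derivative (\<lambda>y. frechet_derivative f (at y) b) (at y) a)"
  shows "frechet_derivative (\<lambda>y. frechet_derivative f (at y) a) (at x) b =
         frechet_derivative (\<lambda>y. frechet_derivative f (at y) b) (at x) a"
proof (rule ccontr)
  define A where "A y = frechet_derivative (\<lambda>y. frechet_derivative f (at y) a) (at y) b" for y
  define B where "B y = frechet_derivative (\<lambda>y. frechet_derivative f (at y) b) (at y) a" for y
  assume "\<not> ?thesis"
  then have "A x \<noteq> B x" unfolding A_def B_def .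
  define e where "e = \<bar>A x - B x\<bar> / 2"
  have "e > 0" using \<open>A x \<noteq> B x\<close> unfolding e_def by simp
  have "isCont A x" "isCont B x"
    using ca cb S unfolding A_def B_def by (simp_all add: continuous_on_eq_continuous_at)
  then obtain d1 d2 where d1: "d1 > 0" "\<And>y. dist y x < d1 \<Longrightarrow> dist (A y) (A x) < e"
    and d2: "d2 > 0" "\<And>y. dist y x < d2 \<Longrightarrow> dist (B y) (B x) < e"
    using \<open>e > 0\<close> unfolding continuous_at_eps_delta by metis
  obtain d3 where d3: "d3 > 0" "ball x d3 \<subseteq> S"
    using S openE by blast
  obtain h where h: "h > 0" "\<And>s \<tau>. 0 \<le> s \<Longrightarrow> s \<le> h \<Longrightarrow> 0 \<le> \<tau> \<Longrightarrow> \<tau> \<le> h \<Longrightarrow>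
      dist (x + s *\<^sub>R a + \<tau> *\<^sub>R b) x < min d1 (min d2 d3)"
    using small_parallelogram[of "min d1 (min d2 d3)" x a b] d1 d2 d3 by auto
  have ab: "x + s *\<^sub>R a + \<tau> *\<^sub>R b \<in> S" if "0 \<le> s" "s \<le> h" "0 \<le> \<tau>" "\<tau> \<le> h" for s \<tau>
    using h(2)[OF that] d3(2) by (auto simp: dist_commute)
  have ba: "x + s *\<^sub>R b + \<tau> *\<^sub>R a \<in> S" if "0 \<le> s" "s \<le> h" "0 \<le> \<tau>" "\<tau> \<le> h" for s \<tau>
    using ab[OF that(3,4,1,2)] by (simp add: algebra_simps)
  obtain s1 t1 where st1: "0 < s1" "s1 < h" "0 < t1" "t1 < h"
    and E1: "f (x + h *\<^sub>R a + h *\<^sub>R b) - f (x + h *\<^sub>R a) - f (x + h *\<^sub>R b) + f x = h * h * A (x + s1 *\<^sub>R a + t1 *\<^sub>R b)"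
    using second_difference_mean_value[OF h(1) ab df da] unfolding A_def by blast
  obtain s2 t2 where st2: "0 < s2" "s2 < h" "0 < t2" "t2 < h"
    and E2: "f (x + h *\<^sub>R b + h *\<^sub>R a) - f (x + h *\<^sub>R b) - f (x + h *\<^sub>R a) + f x = h * h * B (x + s2 *\<^sub>R b + t2 *\<^sub>R a)"
    using second_difference_mean_value[OF h(1) ba df db] unfolding B_def by blast
  have eq1: "x + h *\<^sub>R b + h *\<^sub>R a = x + h *\<^sub>R a + h *\<^sub>R b"
    and eq2: "x + s2 *\<^sub>R b + t2 *\<^sub>R a = x + t2 *\<^sub>R a + s2 *\<^sub>R b"
    by (simp_all add: algebra_simps)
  have "h * h * A (x + s1 *\<^sub>R a + t1 *\<^sub>R b) = h * h * B (x + s2 *\<^sub>R b + t2 *\<^sub>R a)"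
    using E1 E2 unfolding eq1 by linarith
  then have "A (x + s1 *\<^sub>R a + t1 *\<^sub>R b) = B (x + t2 *\<^sub>R a + s2 *\<^sub>R b)"
    using h(1) unfolding eq2 by simp
  moreover have "dist (A (x + s1 *\<^sub>R a + t1 *\<^sub>R b)) (A x) < e"
    using d1(2) h(2)[of s1 t1] st1 by simp
  moreover have "dist (B (x + t2 *\<^sub>R a + s2 *\<^sub>R b)) (B x) < e"
    using d2(2) h(2)[of t2 s2] st2 by simp
  ultimately have "\<bar>A x - B x\<bar> < 2 * e" unfolding dist_real_def by linarith
  then show False unfolding e_def by simp
qed

lemma dds_swap_real:
  fixes f :: "'a::real_normed_vector \<Rightarrow> real"
  assumes "smooth_on S f" "open S" "z \<in> S"
  shows "dds (ps @ a # b # vs) f z = dds (ps @ b # a # vs) f z"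
  using assms(3)
proof (induction ps arbitrary: z)
  case Nil
  have "frechet_derivative (\<lambda>y. frechet_derivative (dds vs f) (at y) b) (at z) a =
        frechet_derivative (\<lambda>y. frechet_derivative (dds vs f) (at y) a) (at z) b"
    by (rule frechet_derivative_second_symmetric[OF assms(2) Nil])
      (use smooth_on_dds_differentiable[OF assms(1,2)] smooth_on_dds_continuous[OF assms(1)] in
        \<open>simp_all only: dds.simps[symmetric]\<close>)
  then show ?case by simp
next
  case (Cons p ps)
  then show ?case
    using frechet_derivative_transform_open[OF assms(2) Cons.prems Cons.IH] by simp
qed

lemma dds_swap:
  fixes f :: "'a::real_normed_vector \<Rightarrow> 'b::euclidean_space"
  assumes "smooth_on S f" "open S" "z \<in> S"
  shows "dds (ps @ a # b # vs) f z = dds (ps @ b # a # vs) f z"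
proof (rule euclidean_eqI)
  fix i :: 'b
  show "dds (ps @ a # b # vs) f z \<bullet> i = dds (ps @ b # a # vs) f z \<bullet> i"
    using dds_swap_real[OF smooth_on_inner_left[OF assms(1,2)] assms(2,3)]
    by (simp only: dds_inner_left[OF assms])
qed

lemma lap_eq_dds: "lap f x = (\<Sum>c\<in>Basis. dds [c, c] f x)"
  by (simp add: lap_def)

lemma dvg_eq_dds: "dvg f x = (\<Sum>b\<in>Basis. dds [b] f x \<bullet> b)"
  by (simp add: dvg_def)

lemma grad_eq_dds: "grad f x = (\<Sum>b\<in>Basis. dds [b] f x *\<^sub>R b)"
  by (simp add: grad_def)

lemma inner_grad_Basis: "b \<in> Basis \<Longrightarrow> grad f x \<bullet> b = frechet_derivative f (at x) b"
  by (simp add: grad_def inner_sum_left inner_Basis if_distrib cong: if_cong)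

lemma frechet_derivative_eq_inner_grad:
  fixes f :: "'a::euclidean_space \<Rightarrow> real"
  assumes "f differentiable (at x)"
  shows "frechet_derivative f (at x) v = grad f x \<bullet> v"
proof -
  note lin = linear_frechet_derivative[OF assms]
  have "frechet_derivative f (at x) v = frechet_derivative f (at x) (\<Sum>b\<in>Basis. (v \<bullet> b) *\<^sub>R b)"
    by (simp add: euclidean_representation)
  also have "\<dots> = (\<Sum>b\<in>Basis. (v \<bullet> b) * (grad f x \<bullet> b))"
    by (simp add: linear_sum[OF lin] linear_scale[OF lin] inner_grad_Basis del: euclidean_representation)
  also have "\<dots> = grad f x \<bullet> v"
    by (subst euclidean_inner) (simp add: mult.commute inner_commute)
  finally show ?thesis .
qed

lemma norm_grad_squared:
  "(norm (grad f x))\<^sup>2 = (\<Sum>c\<in>Basis. (frechet_derivative f (at x) c)\<^sup>2)"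
  unfolding power2_norm_eq_inner by (subst euclidean_inner) (simp add: inner_grad_Basis power2_eq_square)

lemma grad_differentiable:
  assumes "\<And>c. c \<in> Basis \<Longrightarrow> (\<lambda>y. frechet_derivative f (at y) c) differentiable (at x)"
  shows "grad f differentiable (at x)"
  unfolding grad_def[abs_def] by (intro differentiable_sum differentiable_scaleR assms ballI) auto

lemma dvg_grad_eq_lap:
  assumes "\<And>c. c \<in> Basis \<Longrightarrow> (\<lambda>y. frechet_derivative f (at y) c) differentiable (at x)"
  shows "dvg (grad f) x = lap f x"
proof -
  have "dvg (grad f) x = (\<Sum>b\<in>Basis. frechet_derivative (\<lambda>y. grad f y \<bullet> b) (at x) b)"
    by (simp add: dvg_def frechet_derivative_inner_left grad_differentiable[OF assms])
  also have "\<dots> = (\<Sum>b\<in>Basis. frechet_derivative (\<lambda>y. frechet_derivative f (at y) b) (at x) b)"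
    by (intro sum.cong refl) (simp add: inner_grad_Basis)
  finally show ?thesis unfolding lap_def .
qed

lemma dvg_cong_open:
  assumes "open S" "\<And>y. y \<in> S \<Longrightarrow> f y = g y" "x \<in> S"
  shows "dvg f x = dvg g x"
  unfolding dvg_eq_dds by (simp only: dds_cong_open[OF assms])

lemma lap_cong_open:
  assumes "open S" "\<And>y. y \<in> S \<Longrightarrow> f y = g y" "x \<in> S"
  shows "lap f x = lap g x"
  unfolding lap_eq_dds by (simp only: dds_cong_open[OF assms])

lemma dvg_add:
  "f differentiable (at x) \<Longrightarrow> g differentiable (at x) \<Longrightarrow> dvg (\<lambda>y. f y + g y) x = dvg f x + dvg g x"
  by (simp add: dvg_def frechet_derivative_eqI[OF has_derivative_add[OF has_derivative_frechet_derivative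
        has_derivative_frechet_derivative]] inner_add_left sum.distrib)

lemma dvg_diff:
  "f differentiable (at x) \<Longrightarrow> g differentiable (at x) \<Longrightarrow> dvg (\<lambda>y. f y - g y) x = dvg f x - dvg g x"
  by (simp add: dvg_def frechet_derivative_eqI[OF has_derivative_diff[OF has_derivative_frechet_derivative
        has_derivative_frechet_derivative]] inner_diff_left sum_subtractf)

lemma dvg_scaleR:
  "f differentiable (at x) \<Longrightarrow> dvg (\<lambda>y. c *\<^sub>R f y) x = c * dvg f x"
  by (simp add: dvg_def frechet_derivative_eqI[OF has_derivative_scaleR_right[OF has_derivative_frechet_derivative]]
      sum_distrib_left)

lemma smooth_on_lap:
  assumes "smooth_on S f" "open S"
  shows "smooth_on S (lap f)"
  unfolding lap_eq_dds[abs_def] using assms by (intro smooth_on_sum smooth_on_dds) auto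

lemma smooth_on_grad:
  assumes "smooth_on S f" "open S"
  shows "smooth_on S (grad f)"
  unfolding grad_eq_dds[abs_def] using assms
  by (intro smooth_on_sum smooth_on_bounded_linear[OF bounded_linear_scaleR_left] smooth_on_dds) auto

lemma advect_eq_sum:
  assumes "v differentiable (at x)"
  shows "advect u v x = (\<Sum>c\<in>Basis. (u x \<bullet> c) *\<^sub>R frechet_derivative v (at x) c)"
proof -
  note lin = linear_frechet_derivative[OF assms]
  have "advect u v x = frechet_derivative v (at x) (\<Sum>c\<in>Basis. (u x \<bullet> c) *\<^sub>R c)"
    by (simp add: advect_def euclidean_representation)
  also have "\<dots> = (\<Sum>c\<in>Basis. (u x \<bullet> c) *\<^sub>R frechet_derivative v (at x) c)"
    by (simp add: linear_sum[OF lin] linear_scale[OF lin] del: euclidean_representation)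
  finally show ?thesis .
qed

lemma
  assumes "smooth_on S u" "smooth_on S v" "open S"
  shows advect_differentiable: "x \<in> S \<Longrightarrow> advect u v differentiable (at x)"
    and continuous_on_advect: "continuous_on S (advect u v)"
proof -
  have eq: "advect u v y = (\<Sum>c\<in>Basis. (u y \<bullet> c) *\<^sub>R frechet_derivative v (at y) c)" if "y \<in> S" for y
    by (rule advect_eq_sum[OF smooth_on_differentiable[OF assms(2,3) that]])
  show "advect u v differentiable (at x)" if "x \<in> S"
  proof (rule differentiable_transform_open[OF assms(3) that eq])
    have "(\<lambda>y. frechet_derivative v (at y) c) differentiable (at x)" for c
      using smooth_on_dds_differentiable[OF assms(2,3) that, of "[c]"] by simp
    then show "(\<lambda>y. \<Sum>c\<in>Basis. (u y \<bullet> c) *\<^sub>R frechet_derivative v (at y) c) differentiable (at x)"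
      using smooth_on_differentiable[OF assms(1,3) that]
      by (intro differentiable_sum[OF finite_Basis] ballI differentiable_scaleR differentiable_inner
          differentiable_const) simp_all
  qed
  have "continuous_on S (\<lambda>y. frechet_derivative v (at y) c)" for c
    using smooth_on_dds_continuous[OF assms(2), of "[c]"] by simp
  then have "continuous_on S (\<lambda>y. \<Sum>c\<in>Basis. (u y \<bullet> c) *\<^sub>R frechet_derivative v (at y) c)"
    using smooth_on_continuous[OF assms(1)]
    by (intro continuous_on_sum continuous_on_scaleR continuous_on_inner continuous_on_const) simp_all
  then show "continuous_on S (advect u v)"
    using continuous_on_cong[of S S "advect u v", OF refl eq] by simp
qed
lemma lap_dvg_commute:
  fixes f :: "'a::euclidean_space \<Rightarrow> 'a"
  assumes "smooth_on S f" "open S" "x \<in> S"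
  shows "lap (dvg f) x = dvg (lap f) x"
proof -
  have "dds [c, c] (\<lambda>y. dds [b] f y \<bullet> b) x = dds [c, c, b] f x \<bullet> b" for b c
    using dds_inner_left[OF smooth_on_dds[OF assms(1)] assms(2,3), of "[c, c]" "[b]" b]
    by (simp add: dds_append del: dds.simps)
  then have "lap (dvg f) x = (\<Sum>c\<in>Basis. \<Sum>b\<in>Basis. dds [c, c, b] f x \<bullet> b)"
    unfolding lap_eq_dds dvg_eq_dds[abs_def] using assms
    by (simp add: dds_sum smooth_on_inner_left smooth_on_dds del: dds.simps)
  also have "\<dots> = (\<Sum>b\<in>Basis. \<Sum>c\<in>Basis. dds [b, c, c] f x \<bullet> b)"
  proof (subst sum.swap, intro sum.cong refl arg_cong2[where f = inner])
    fix b c :: 'a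
    have "dds [c, c, b] f x = dds [c, b, c] f x"
      using dds_swap[OF assms, of "[c]" c b "[]"] by simp
    also have "\<dots> = dds [b, c, c] f x"
      using dds_swap[OF assms, of "[]" c b "[c]"] by simp
    finally show "dds [c, c, b] f x = dds [b, c, c] f x" .
  qed
  also have "\<dots> = dvg (lap f) x"
    unfolding lap_eq_dds[abs_def] dvg_eq_dds using assms
    by (simp add: dds_sum smooth_on_dds dds_append inner_sum_left del: dds.simps)
  finally show ?thesis .
qed

lemma open_slice: "open U \<Longrightarrow> open {y. (y, t) \<in> U}"
  using continuous_open_preimage[of UNIV "\<lambda>y. (y, t)" U] by (simp add: vimage_def continuous_on_Pair)

lemma has_derivative_slice:
  assumes "F differentiable (at (x, t))"
  shows "((\<lambda>y. F (y, t)) has_derivative (\<lambda>v. frechet_derivative F (at (x, t)) (v, 0))) (at x)"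
proof -
  have "((\<lambda>y. (y, t)) has_derivative (\<lambda>v. (v, 0))) (at x)"
    by (auto intro!: derivative_eq_intros)
  from has_derivative_compose[OF this has_derivative_frechet_derivative[OF assms]] show ?thesis
    by simp
qed

lemma frechet_derivative_slice:
  "F differentiable (at (x, t)) \<Longrightarrow>
    frechet_derivative (\<lambda>y. F (y, t)) (at x) v = frechet_derivative F (at (x, t)) (v, 0)"
  by (rule frechet_derivative_eqI[OF has_derivative_slice])

lemma has_vector_derivative_time_slice:
  assumes "F differentiable (at (x, t))"
  shows "((\<lambda>s. F (x, s)) has_vector_derivative frechet_derivative F (at (x, t)) (0, 1)) (at t)"
  using has_vector_derivative_along_line[of F "(x, 0)" t "(0, 1)"] assms by simp

lemma dds_slice:
  assumes "smooth_on U F" "open U" "(y, t) \<in> U"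
  shows "dds vs (\<lambda>y. F (y, t)) y = dds (map (\<lambda>v. (v, 0)) vs) F (y, t)"
  using assms(3)
proof (induction vs arbitrary: y)
  case (Cons v vs)
  have "dds (v # vs) (\<lambda>y. F (y, t)) y = frechet_derivative (\<lambda>y. dds (map (\<lambda>v. (v, 0)) vs) F (y, t)) (at y) v"
    using frechet_derivative_transform_open[OF open_slice[OF assms(2), of t], of y "dds vs (\<lambda>y. F (y, t))"] Cons
    by auto
  also have "\<dots> = dds (map (\<lambda>v. (v, 0)) (v # vs)) F (y, t)"
    by (simp add: frechet_derivative_slice smooth_on_dds_differentiable[OF assms(1,2) Cons.prems])
  finally show ?case .
qed simp

lemma smooth_on_slice:
  assumes "smooth_on U F" "open U"
  shows "smooth_on {y. (y, t) \<in> U} (\<lambda>y. F (y, t))"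
proof (rule smooth_on_openI[OF open_slice[OF assms(2)]])
  fix vs y assume y: "y \<in> {y. (y, t) \<in> U}"
  have "(\<lambda>y. dds (map (\<lambda>v. (v, 0)) vs) F (y, t)) differentiable (at y)"
    using has_derivative_slice[OF smooth_on_dds_differentiable[OF assms]] y
    unfolding differentiable_def by blast
  then show "dds vs (\<lambda>y. F (y, t)) differentiable (at y)"
    by (rule differentiable_transform_open[OF open_slice[OF assms(2)] y, rotated])
      (simp add: dds_slice[OF assms])
qed

lemma
  assumes "smooth_on U (\<lambda>z. F (fst z) (snd z))" "open U" "(x, t) \<in> U"
  shows has_vector_derivative_tderiv: "((\<lambda>s. F x s) has_vector_derivative tderiv F x t) (at t)"
    and tderiv_eq_dds: "tderiv F x t = dds [(0, 1)] (\<lambda>z. F (fst z) (snd z)) (x, t)"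
proof -
  have "((\<lambda>s. F x s) has_vector_derivative dds [(0, 1)] (\<lambda>z. F (fst z) (snd z)) (x, t)) (at t)"
    using has_vector_derivative_time_slice[OF smooth_on_differentiable[OF assms]] by simp
  then show "tderiv F x t = dds [(0, 1)] (\<lambda>z. F (fst z) (snd z)) (x, t)"
    "((\<lambda>s. F x s) has_vector_derivative tderiv F x t) (at t)"
    unfolding tderiv_def by (simp_all add: vector_derivative_at)
qed

lemma smooth_on_curried_slice:
  assumes "smooth_on U (\<lambda>z. F (fst z) (snd z))" "open U"
  shows "smooth_on {y. (y, t) \<in> U} (\<lambda>y. F y t)"
  using smooth_on_slice[OF assms, of t] by simp

lemma dvg_slice_eq_dds:
  assumes "smooth_on U (\<lambda>z. F (fst z) (snd z))" "open U" "(x, t) \<in> U"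
  shows "dvg (\<lambda>y. F y t) x = (\<Sum>b\<in>Basis. dds [(b, 0)] (\<lambda>z. F (fst z) (snd z)) (x, t) \<bullet> b)"
  unfolding dvg_eq_dds using dds_slice[OF assms, of "[_]"] by (simp del: dds.simps)

lemma smooth_on_dvg_slice:
  assumes "smooth_on U (\<lambda>z. F (fst z) (snd z))" "open U"
  shows "smooth_on U (\<lambda>z. dvg (\<lambda>y. F y (snd z)) (fst z))"
proof (rule smooth_on_cong[OF assms(2)])
  show "smooth_on U (\<lambda>z. \<Sum>b\<in>Basis. dds [(b, 0)] (\<lambda>z. F (fst z) (snd z)) z \<bullet> b)"
    using assms by (intro smooth_on_sum smooth_on_inner_left smooth_on_dds) auto
  show "(\<Sum>b\<in>Basis. dds [(b, 0)] (\<lambda>z. F (fst z) (snd z)) z \<bullet> b) = dvg (\<lambda>y. F y (snd z)) (fst z)"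
    if "z \<in> U" for z
    using dvg_slice_eq_dds[OF assms, of "fst z" "snd z"] that by simp
qed

lemma tderiv_dvg_commute:
  fixes F :: "'a::euclidean_space \<Rightarrow> real \<Rightarrow> 'a"
  assumes F: "smooth_on U (\<lambda>z. F (fst z) (snd z))" and U: "open U" "(x, t) \<in> U"
  shows "tderiv (\<lambda>x s. dvg (\<lambda>y. F y s) x) x t = dvg (\<lambda>y. tderiv F y t) x"
proof -
  define \<Phi> where "\<Phi> = (\<lambda>z. F (fst z) (snd z))"
  have \<Phi>: "smooth_on U \<Phi>" using F unfolding \<Phi>_def .
  have "tderiv (\<lambda>x s. dvg (\<lambda>y. F y s) x) x t
      = dds [(0, 1)] (\<lambda>z. dvg (\<lambda>y. F y (snd z)) (fst z)) (x, t)"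
    using tderiv_eq_dds[OF smooth_on_dvg_slice[OF F U(1)] U] by simp
  also have "\<dots> = dds [(0, 1)] (\<lambda>z. \<Sum>b\<in>Basis. dds [(b, 0)] \<Phi> z \<bullet> b) (x, t)"
    using dvg_slice_eq_dds[OF F U(1)] unfolding \<Phi>_def
    by (intro dds_cong_open[OF U(1) _ U(2)]) auto
  also have "\<dots> = (\<Sum>b\<in>Basis. dds [(0, 1)] (\<lambda>z. dds [(b, 0)] \<Phi> z \<bullet> b) (x, t))"
    using \<Phi> U by (intro dds_sum smooth_on_inner_left smooth_on_dds) auto
  also have "\<dots> = (\<Sum>b\<in>Basis. dds [(0, 1), (b, 0)] \<Phi> (x, t) \<bullet> b)"
    using dds_inner_left[OF smooth_on_dds[OF \<Phi>] U] by (simp add: dds_append del: dds.simps)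
  also have "\<dots> = (\<Sum>b\<in>Basis. dds [(b, 0), (0, 1)] \<Phi> (x, t) \<bullet> b)"
    by (intro sum.cong refl arg_cong2[where f = inner]) (rule dds_swap[OF \<Phi> U, where ps = "[]", unfolded append_Nil])
  also have "\<dots> = (\<Sum>b\<in>Basis. dds [b] (\<lambda>y. tderiv F y t) x \<bullet> b)"
  proof (intro sum.cong refl arg_cong2[where f = inner])
    fix b :: 'a
    have "dds [b] (\<lambda>y. tderiv F y t) x = dds [b] (\<lambda>y. dds [(0, 1)] \<Phi> (y, t)) x"
      using tderiv_eq_dds[OF F U(1)] U unfolding \<Phi>_def
      by (intro dds_cong_open[OF open_slice[OF U(1)], of _ _ _ x]) auto
    also have "\<dots> = dds [(b, 0), (0, 1)] \<Phi> (x, t)"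
      using dds_slice[OF smooth_on_dds[OF \<Phi>] U, of "[b]"] by (simp add: dds_append del: dds.simps)
    finally show "dds [(b, 0), (0, 1)] \<Phi> (x, t) = dds [b] (\<lambda>y. tderiv F y t) x" ..
  qed
  finally show ?thesis by (simp add: dvg_eq_dds)
qed

lemma
  assumes "Ck_on 2 V f" "open V"
  shows Ck_on_2_differentiable: "y \<in> V \<Longrightarrow> f differentiable (at y)"
    and Ck_on_2_differentiable_1: "y \<in> V \<Longrightarrow> (\<lambda>y. frechet_derivative f (at y) c) differentiable (at y)"
    and Ck_on_2_continuous: "continuous_on V f"
    and Ck_on_2_continuous_1: "continuous_on V (\<lambda>y. frechet_derivative f (at y) c)"
    and Ck_on_2_continuous_2:
      "continuous_on V (\<lambda>y. frechet_derivative (\<lambda>y. frechet_derivative f (at y) c) (at y) d)"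
proof -
  have A: "\<And>vs. length vs < 2 \<Longrightarrow> dds vs f differentiable_on V"
    and B: "\<And>vs. length vs = 2 \<Longrightarrow> continuous_on V (dds vs f)"
    using assms(1) unfolding Ck_on_def by auto
  have d0: "f differentiable_on V" and d1: "(\<lambda>y. frechet_derivative f (at y) c) differentiable_on V"
    using A[of "[]"] A[of "[c]"] by simp_all
  show "y \<in> V \<Longrightarrow> f differentiable (at y)"
    and "y \<in> V \<Longrightarrow> (\<lambda>y. frechet_derivative f (at y) c) differentiable (at y)"
    using d0 d1 assms(2) differentiable_on_eq_differentiable_at by blast+
  show "continuous_on V f" "continuous_on V (\<lambda>y. frechet_derivative f (at y) c)"
    using d0 d1 differentiable_imp_continuous_on by blast+
  show "continuous_on V (\<lambda>y. frechet_derivative (\<lambda>y. frechet_derivative f (at y) c) (at y) d)"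
    using B[of "[d, c]"] by simp
qed

lemma Ck_on_subset: "Ck_on k S f \<Longrightarrow> T \<subseteq> S \<Longrightarrow> Ck_on k T f"
  unfolding Ck_on_def using continuous_on_subset differentiable_on_subset by blast

lemma Ck_on_add:
  assumes f: "Ck_on k V f" and g: "Ck_on k V g" and "open V"
  shows "Ck_on k V (\<lambda>x. f x + g x)"
proof -
  have sum: "dds vs (\<lambda>x. f x + g x) y = dds vs f y + dds vs g y" if "length vs \<le> k" "y \<in> V" for vs y
    using that
  proof (induction vs arbitrary: y)
    case (Cons v vs)
    then have "dds vs f differentiable (at y)" "dds vs g differentiable (at y)"
      using f g \<open>open V\<close> unfolding Ck_on_def by (auto simp: differentiable_on_eq_differentiable_at)
    then show ?case
      using frechet_derivative_transform_open[OF \<open>open V\<close> Cons.prems(2), of "dds vs (\<lambda>x. f x + g x)"] Cons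
      by (simp add: frechet_derivative_eqI[OF has_derivative_add[OF has_derivative_frechet_derivative
            has_derivative_frechet_derivative]])
  qed simp
  show ?thesis
    unfolding Ck_on_def
  proof (intro conjI allI impI)
    fix vs :: "'a list"
    assume vs: "length vs < k"
    then have "dds vs f differentiable_on V" "dds vs g differentiable_on V"
      using f g unfolding Ck_on_def by auto
    then show "dds vs (\<lambda>x. f x + g x) differentiable_on V"
      unfolding differentiable_on_eq_differentiable_at[OF \<open>open V\<close>]
    proof (intro ballI)
      fix y assume "y \<in> V"
      assume "\<forall>y\<in>V. dds vs f differentiable (at y)" "\<forall>y\<in>V. dds vs g differentiable (at y)"
      then have "(\<lambda>y. dds vs f y + dds vs g y) differentiable (at y)"
        using \<open>y \<in> V\<close> by (simp add: differentiable_add)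
      then show "dds vs (\<lambda>x. f x + g x) differentiable (at y)"
        by (rule differentiable_transform_open[OF \<open>open V\<close> \<open>y \<in> V\<close>, rotated]) (simp add: sum vs less_imp_le)
    qed
  next
    fix vs :: "'a list"
    assume vs: "length vs = k"
    then have "continuous_on V (\<lambda>y. dds vs f y + dds vs g y)"
      using f g unfolding Ck_on_def by (simp add: continuous_on_add)
    then show "continuous_on V (dds vs (\<lambda>x. f x + g x))"
      using continuous_on_cong[of V V "dds vs (\<lambda>x. f x + g x)" "\<lambda>y. dds vs f y + dds vs g y"] sum vs
      by simp
  qed
qed

lemma has_derivative_sq_dist:
  fixes y :: "'a::euclidean_space"
  shows "((\<lambda>x. (x - y) \<bullet> (x - y) - R) has_derivative (\<lambda>v. 2 * ((x - y) \<bullet> v))) (at x)"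
  by (auto intro!: derivative_eq_intros simp: inner_commute)

lemma grad_sq_dist:
  fixes y :: "'a::euclidean_space"
  shows "grad (\<lambda>x. (x - y) \<bullet> (x - y) - R) x = 2 *\<^sub>R (x - y)"
proof -
  have "(\<Sum>b\<in>Basis. (2 * ((x - y) \<bullet> b)) *\<^sub>R b) = 2 *\<^sub>R (\<Sum>b\<in>Basis. ((x - y) \<bullet> b) *\<^sub>R b)"
    by (simp add: scaleR_sum_right)
  then show ?thesis
    unfolding grad_def frechet_derivative_eqI[OF has_derivative_sq_dist] euclidean_representation .
qed

lemma Ck_on_2_sq_dist:
  fixes y :: "'a::euclidean_space"
  shows "Ck_on 2 V (\<lambda>x. (x - y) \<bullet> (x - y) - R)"
proof -
  let ?f = "\<lambda>x. (x - y) \<bullet> (x - y) - R"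
  have d1: "dds [c] ?f = (\<lambda>x. 2 * ((x - y) \<bullet> c))" for c
    by (simp add: frechet_derivative_eqI[OF has_derivative_sq_dist])
  have lin: "((\<lambda>x. 2 * ((x - y) \<bullet> c)) has_derivative (\<lambda>v. 2 * (v \<bullet> c))) (at x)" for c x
    by (auto intro!: derivative_eq_intros)
  have d2: "dds [d, c] ?f = (\<lambda>x. 2 * (d \<bullet> c))" for c d
    by (simp only: dds.simps(2)[of d "[c]"] d1) (simp add: frechet_derivative_eqI[OF lin])
  show ?thesis
    unfolding Ck_on_def
  proof (intro conjI allI impI)
    fix vs :: "'a list" assume "length vs < 2"
    then consider "vs = []" | c where "vs = [c]"
      by (cases vs) auto
    then show "dds vs ?f differentiable_on V"
    proof cases
      case 1
      then show ?thesis
        using has_derivative_sq_dist[of y R] unfolding differentiable_on_def differentiable_def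
        by (auto intro: has_derivative_at_withinI)
    next
      case (2 c)
      show ?thesis
        using lin[of c] unfolding 2 d1 differentiable_on_def differentiable_def
        by (auto intro: has_derivative_at_withinI)
    qed
  next
    fix vs :: "'a list" assume "length vs = 2"
    then obtain d c where "vs = [d, c]"
      by (auto simp: length_Suc_conv numeral_2_eq_2)
    then show "continuous_on V (dds vs ?f)"
      using d2 by simp
  qed
qed

lemma grad_add:
  "f differentiable (at x) \<Longrightarrow> g differentiable (at x) \<Longrightarrow> grad (\<lambda>y. f y + g y) x = grad f x + grad g x"
  by (simp add: grad_def frechet_derivative_eqI[OF has_derivative_add[OF has_derivative_frechet_derivative
        has_derivative_frechet_derivative]] scaleR_add_left sum.distrib)

section \<open>The Hopf lemma\<close>

lemma has_derivative_exp_barrier: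
  fixes \<phi> \<sigma> :: "'a::real_normed_vector \<Rightarrow> real"
  assumes "(\<phi> has_derivative D\<phi>) (at x)" "(\<sigma> has_derivative D\<sigma>) (at x)"
  shows "((\<lambda>y. \<phi> y + \<epsilon> * (exp (- \<alpha> * \<sigma> y) - 1)) has_derivative
      (\<lambda>h. D\<phi> h + \<epsilon> * (exp (- \<alpha> * \<sigma> x) * (- \<alpha> * D\<sigma> h)))) (at x)"
proof -
  have "((\<lambda>y. exp (- \<alpha> * \<sigma> y)) has_derivative (\<lambda>h. - \<alpha> * D\<sigma> h * exp (- \<alpha> * \<sigma> x))) (at x)"
    using has_derivative_exp[OF has_derivative_mult_right[OF assms(2), of "- \<alpha>"]] by simp
  from has_derivative_add[OF assms(1) has_derivative_mult_right[OF has_derivative_diff[OF this has_derivative_const]]]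
  show ?thesis
    by (rule has_derivative_eq_rhs) (simp add: fun_eq_iff algebra_simps)
qed

lemma exp_barrier_second_derivative:
  fixes \<phi> \<sigma> :: "'a::real_normed_vector \<Rightarrow> real" and \<epsilon> \<alpha> :: real
  assumes S: "open S" "x \<in> S"
    and d\<phi>: "\<And>y. y \<in> S \<Longrightarrow> \<phi> differentiable (at y)" and d\<sigma>: "\<And>y. y \<in> S \<Longrightarrow> \<sigma> differentiable (at y)"
    and d\<phi>1: "(\<lambda>y. frechet_derivative \<phi> (at y) c) differentiable (at x)"
    and d\<sigma>1: "(\<lambda>y. frechet_derivative \<sigma> (at y) c) differentiable (at x)"
  defines "v \<equiv> \<lambda>y. \<phi> y + \<epsilon> * (exp (- \<alpha> * \<sigma> y) - 1)"
  shows "(\<lambda>y. frechet_derivative v (at y) c) differentiable (at x)"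
    and "frechet_derivative (\<lambda>y. frechet_derivative v (at y) c) (at x) c =
      frechet_derivative (\<lambda>y. frechet_derivative \<phi> (at y) c) (at x) c
      + \<epsilon> * exp (- \<alpha> * \<sigma> x) * (\<alpha>\<^sup>2 * (frechet_derivative \<sigma> (at x) c)\<^sup>2
          - \<alpha> * frechet_derivative (\<lambda>y. frechet_derivative \<sigma> (at y) c) (at x) c)"
proof -
  define Dv where
    "Dv y = frechet_derivative \<phi> (at y) c + \<epsilon> * (exp (- \<alpha> * \<sigma> y) * (- \<alpha> * frechet_derivative \<sigma> (at y) c))"
    for y
  have eq: "frechet_derivative v (at y) c = Dv y" if "y \<in> S" for y
    unfolding v_def Dv_def using d\<phi>[OF that] d\<sigma>[OF that]
    by (intro frechet_derivative_eqI has_derivative_exp_barrier has_derivative_frechet_derivative)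
  have hd: "(Dv has_derivative (\<lambda>h. frechet_derivative (\<lambda>y. frechet_derivative \<phi> (at y) c) (at x) h
      + \<epsilon> * (exp (- \<alpha> * \<sigma> x) * (- \<alpha> * frechet_derivative \<sigma> (at x) h) * (- \<alpha> * frechet_derivative \<sigma> (at x) c)
        + exp (- \<alpha> * \<sigma> x) * (- \<alpha> * frechet_derivative (\<lambda>y. frechet_derivative \<sigma> (at y) c) (at x) h)))) (at x)"
    unfolding Dv_def
    using has_derivative_frechet_derivative[OF d\<phi>1] has_derivative_frechet_derivative[OF d\<sigma>1]
      has_derivative_frechet_derivative[OF d\<sigma>[OF S(2)]]
    by (auto intro!: derivative_eq_intros simp: algebra_simps)
  show "(\<lambda>y. frechet_derivative v (at y) c) differentiable (at x)"
    by (rule differentiable_transform_open[OF S eq]) (use hd in \<open>auto simp: differentiable_def\<close>)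
  show "frechet_derivative (\<lambda>y. frechet_derivative v (at y) c) (at x) c =
      frechet_derivative (\<lambda>y. frechet_derivative \<phi> (at y) c) (at x) c
      + \<epsilon> * exp (- \<alpha> * \<sigma> x) * (\<alpha>\<^sup>2 * (frechet_derivative \<sigma> (at x) c)\<^sup>2
          - \<alpha> * frechet_derivative (\<lambda>y. frechet_derivative \<sigma> (at y) c) (at x) c)"
    using frechet_derivative_transform_open[OF S eq] frechet_derivative_eqI[OF hd]
    by (simp add: algebra_simps power2_eq_square)
qed

lemma exp_barrier_not_local_max:
  fixes \<phi> \<sigma> :: "'a::euclidean_space \<Rightarrow> real"
  assumes S: "open S" "x \<in> S" and C2: "Ck_on 2 S \<phi>" "Ck_on 2 S \<sigma>"
    and "0 \<le> lap \<phi> x" "lap \<sigma> x < \<alpha> * (norm (grad \<sigma> x))\<^sup>2" "\<alpha> > 0" "\<epsilon> > 0"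
  shows "\<exists>y\<in>S. \<phi> x + \<epsilon> * (exp (- \<alpha> * \<sigma> x) - 1) < \<phi> y + \<epsilon> * (exp (- \<alpha> * \<sigma> y) - 1)"
proof (rule ccontr)
  let ?v = "\<lambda>y. \<phi> y + \<epsilon> * (exp (- \<alpha> * \<sigma> y) - 1)"
  assume "\<not> ?thesis"
  then have max: "?v y \<le> ?v x" if "y \<in> S" for y
    using that by (auto simp: not_less)
  obtain \<delta> where \<delta>: "\<delta> > 0" "ball x \<delta> \<subseteq> S"
    using S openE by blast
  note d = Ck_on_2_differentiable[OF _ S(1)] Ck_on_2_differentiable_1[OF _ S(1)]
  note second = exp_barrier_second_derivative[OF S d(1)[OF C2(1)] d(1)[OF C2(2)]
      d(2)[OF C2(1) S(2)] d(2)[OF C2(2) S(2)], where \<epsilon> = \<epsilon> and \<alpha> = \<alpha>]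
  (* Each second directional derivative of v is nonpositive at the maximum x, but their sum is
     lap phi + eps exp (- alpha sigma) alpha (alpha |grad sigma|^2 - lap sigma) > 0. *)
  have "frechet_derivative (\<lambda>y. frechet_derivative ?v (at y) c) (at x) c \<le> 0" for c
  proof (rule second_frechet_derivative_nonpos_at_local_max[OF \<delta>(1)])
    show "?v differentiable (at y)" if "y \<in> ball x \<delta>" for y
      using has_derivative_exp_barrier[OF has_derivative_frechet_derivative has_derivative_frechet_derivative,
          OF d(1)[OF C2(1)] d(1)[OF C2(2)]] that \<delta>(2)
      unfolding differentiable_def by blast
  qed (use second(1) max \<delta>(2) in auto)
  then have "(\<Sum>c\<in>Basis. frechet_derivative (\<lambda>y. frechet_derivative ?v (at y) c) (at x) c) \<le> 0"
    by (simp add: sum_nonpos)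
  moreover have "(\<Sum>c\<in>Basis. frechet_derivative (\<lambda>y. frechet_derivative ?v (at y) c) (at x) c) =
      (\<Sum>c\<in>Basis. frechet_derivative (\<lambda>y. frechet_derivative \<phi> (at y) c) (at x) c
      + \<epsilon> * exp (- \<alpha> * \<sigma> x) * (\<alpha>\<^sup>2 * (frechet_derivative \<sigma> (at x) c)\<^sup>2
          - \<alpha> * frechet_derivative (\<lambda>y. frechet_derivative \<sigma> (at y) c) (at x) c))"
    by (rule sum.cong[OF refl second(2)])
  moreover have "\<dots> = lap \<phi> x + \<epsilon> * exp (- \<alpha> * \<sigma> x) * \<alpha> * (\<alpha> * (norm (grad \<sigma> x))\<^sup>2 - lap \<sigma> x)"
    unfolding norm_grad_squared lap_def
    by (simp add: sum.distrib sum_subtractf sum_distrib_left algebra_simps power2_eq_square)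
  moreover have "0 < \<epsilon> * exp (- \<alpha> * \<sigma> x) * \<alpha> * (\<alpha> * (norm (grad \<sigma> x))\<^sup>2 - lap \<sigma> x)"
    using assms by simp
  ultimately show False using \<open>0 \<le> lap \<phi> x\<close> by linarith
qed

lemma compact_attains_strict_bound:
  fixes f :: "'a::topological_space \<Rightarrow> real"
  assumes "compact K" "continuous_on K f" "\<And>y. y \<in> K \<Longrightarrow> f y < M"
  shows "\<exists>\<eta>>0. \<forall>y\<in>K. f y \<le> M - \<eta>"
proof (cases "K = {}")
  case False
  then obtain ym where "ym \<in> K" "\<And>y. y \<in> K \<Longrightarrow> f y \<le> f ym"
    using continuous_attains_sup[OF assms(1) _ assms(2)] by blast
  then show ?thesis using assms(3)[of ym] by (intro exI[of _ "M - f ym"]) auto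
next
  case True
  then show ?thesis by (intro exI[of _ 1]) simp
qed

lemma hopf_barrier_exponent:
  fixes \<sigma> :: "'a::euclidean_space \<Rightarrow> real"
  assumes V: "open V" "x0 \<in> V" and C2: "Ck_on 2 V \<sigma>" and "grad \<sigma> x0 \<noteq> 0"
  obtains \<alpha> r where "\<alpha> > 0" "r > 0" "cball x0 r \<subseteq> V"
    "\<And>y. y \<in> cball x0 r \<Longrightarrow> lap \<sigma> y < \<alpha> * (norm (grad \<sigma> y))\<^sup>2"
proof -
  define Q where "Q y = (norm (grad \<sigma> y))\<^sup>2" for y
  define m where "m = Q x0 / 2"
  have "m > 0" using assms(4) unfolding m_def Q_def by simp
  have "continuous_on V Q"
    unfolding Q_def norm_grad_squared
    by (intro continuous_intros Ck_on_2_continuous_1[OF C2 V(1)])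
  then have "isCont Q x0"
    using V continuous_on_eq_continuous_at by blast
  then obtain r1 where r1: "r1 > 0" "\<And>y. dist y x0 < r1 \<Longrightarrow> dist (Q y) (Q x0) < m"
    using \<open>m > 0\<close> unfolding continuous_at_eps_delta by blast
  obtain r0 where r0: "r0 > 0" "cball x0 r0 \<subseteq> V"
    using V open_contains_cball by blast
  define r where "r = min r0 (r1 / 2)"
  have r: "r > 0" "cball x0 r \<subseteq> V" using r0 r1 unfolding r_def by auto
  have Qm: "m < Q y" if "y \<in> cball x0 r" for y
  proof -
    have "dist (Q y) (Q x0) < m"
      using r1(2)[of y] that r1(1) unfolding r_def by (auto simp: dist_commute)
    then show ?thesis unfolding m_def dist_real_def abs_less_iff by linarith
  qed
  have "continuous_on (cball x0 r) (lap \<sigma>)"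
    unfolding lap_def[abs_def]
    by (intro continuous_intros continuous_on_subset[OF Ck_on_2_continuous_2[OF C2 V(1)] r(2)])
  from compact_imp_bounded[OF compact_continuous_image[OF this compact_cball]]
  obtain L where L: "L > 0" "\<And>y. y \<in> cball x0 r \<Longrightarrow> norm (lap \<sigma> y) \<le> L"
    unfolding bounded_pos by auto
  show ?thesis
  proof (rule that[of "(L + 1) / m" r])
    show "(L + 1) / m > 0" using L \<open>m > 0\<close> by simp
    show "lap \<sigma> y < (L + 1) / m * (norm (grad \<sigma> y))\<^sup>2" if "y \<in> cball x0 r" for y
    proof -
      have "lap \<sigma> y < L + 1" using L(2)[OF that] by simp
      also have "L + 1 = (L + 1) / m * m" using \<open>m > 0\<close> by simp
      also have "\<dots> \<le> (L + 1) / m * Q y"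
        using Qm[OF that] L \<open>m > 0\<close> by (intro mult_left_mono) auto
      finally show ?thesis unfolding Q_def .
    qed
  qed (use r in auto)
qed

lemma compact_cball_sublevel:
  fixes \<sigma> :: "'a::euclidean_space \<Rightarrow> real"
  assumes "continuous_on (cball x r) \<sigma>"
  shows "compact (cball x r \<inter> \<sigma> -` {..0})"
proof -
  have "closed (cball x r \<inter> \<sigma> -` {..0})"
    by (rule continuous_closed_preimage[OF assms closed_cball closed_atMost])
  then show ?thesis by (simp add: compact_eq_bounded_closed bounded_Int)
qed

lemma hopf_barrier_boundary_bound:
  fixes \<phi> \<sigma> :: "'a::euclidean_space \<Rightarrow> real"
  assumes cont: "continuous_on (cball x0 r) \<phi>" "continuous_on (cball x0 r) \<sigma>" and "r > 0"
    and le: "\<And>x. x \<in> cball x0 r \<Longrightarrow> \<sigma> x \<le> 0 \<Longrightarrow> \<phi> x \<le> \<phi> x0"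
    and lt: "\<And>x. x \<in> cball x0 r \<Longrightarrow> x \<noteq> x0 \<Longrightarrow> \<sigma> x \<le> 0 \<Longrightarrow> \<phi> x < \<phi> x0"
  obtains \<epsilon> where "\<epsilon> > 0" "\<And>y. y \<in> cball x0 r \<Longrightarrow> \<sigma> y \<le> 0 \<Longrightarrow> \<sigma> y = 0 \<or> dist x0 y = r \<Longrightarrow>
      \<phi> y + \<epsilon> * (exp (- \<alpha> * \<sigma> y) - 1) \<le> \<phi> x0"
proof -
  define K where "K = cball x0 r \<inter> \<sigma> -` {..0}"
  have "compact K" unfolding K_def by (rule compact_cball_sublevel[OF cont(2)])
  have "compact (K \<inter> sphere x0 r)" using \<open>compact K\<close> by (simp add: compact_Int_closed)
  moreover have "continuous_on (K \<inter> sphere x0 r) \<phi>"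
    by (rule continuous_on_subset[OF cont(1)]) (unfold K_def, blast)
  moreover have "\<phi> y < \<phi> x0" if "y \<in> K \<inter> sphere x0 r" for y
  proof (rule lt)
    show "y \<in> cball x0 r" "\<sigma> y \<le> 0" using that unfolding K_def by auto
    show "y \<noteq> x0" using that \<open>r > 0\<close> by auto
  qed
  ultimately have "\<exists>\<eta>>0. \<forall>y\<in>K \<inter> sphere x0 r. \<phi> y \<le> \<phi> x0 - \<eta>"
    by (rule compact_attains_strict_bound)
  then obtain \<eta> where \<eta>: "\<eta> > 0" "\<And>y. y \<in> K \<inter> sphere x0 r \<Longrightarrow> \<phi> y \<le> \<phi> x0 - \<eta>"
    by blast
  have "continuous_on K \<sigma>"
    by (rule continuous_on_subset[OF cont(2)]) (unfold K_def, blast)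
  then have "continuous_on K (\<lambda>y. exp (- \<alpha> * \<sigma> y) - 1)"
    by (intro continuous_intros)
  from compact_imp_bounded[OF compact_continuous_image[OF this \<open>compact K\<close>]]
  obtain C where C: "C > 0" "\<And>y. y \<in> K \<Longrightarrow> norm (exp (- \<alpha> * \<sigma> y) - 1) \<le> C"
    unfolding bounded_pos by auto
  show ?thesis
  proof (rule that[of "\<eta> / (2 * C)"])
    show "\<eta> / (2 * C) > 0" using \<eta> C by simp
    fix y assume y: "y \<in> cball x0 r" "\<sigma> y \<le> 0" "\<sigma> y = 0 \<or> dist x0 y = r"
    from y(3) show "\<phi> y + \<eta> / (2 * C) * (exp (- \<alpha> * \<sigma> y) - 1) \<le> \<phi> x0"
    proof
      assume "\<sigma> y = 0"
      then show ?thesis using le[OF y(1,2)] by simp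
    next
      assume "dist x0 y = r"
      then have "y \<in> K \<inter> sphere x0 r" using y unfolding K_def by simp
      have "exp (- \<alpha> * \<sigma> y) - 1 \<le> C"
        using C(2)[of y] y unfolding K_def by (simp add: abs_le_iff)
      then have "\<eta> / (2 * C) * (exp (- \<alpha> * \<sigma> y) - 1) \<le> \<eta> / (2 * C) * C"
        using \<eta>(1) C(1) by (intro mult_left_mono) auto
      also have "\<dots> = \<eta> / 2" using C(1) by simp
      finally show ?thesis using \<eta>(2)[OF \<open>y \<in> K \<inter> sphere x0 r\<close>] \<eta>(1) by linarith
    qed
  qed
qed

lemma hopf_barrier_max_on_boundary:
  fixes \<phi> \<sigma> :: "'a::euclidean_space \<Rightarrow> real"
  assumes V: "open V" "cball x0 r \<subseteq> V" and C2: "Ck_on 2 V \<phi>" "Ck_on 2 V \<sigma>"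
    and \<alpha>: "\<alpha> > 0" "\<And>y. y \<in> cball x0 r \<Longrightarrow> lap \<sigma> y < \<alpha> * (norm (grad \<sigma> y))\<^sup>2" and "\<epsilon> > 0"
    and lap: "\<And>y. y \<in> ball x0 r \<Longrightarrow> \<sigma> y < 0 \<Longrightarrow> 0 \<le> lap \<phi> y"
    and bdry: "\<And>y. y \<in> cball x0 r \<Longrightarrow> \<sigma> y \<le> 0 \<Longrightarrow> \<sigma> y = 0 \<or> dist x0 y = r \<Longrightarrow>
      \<phi> y + \<epsilon> * (exp (- \<alpha> * \<sigma> y) - 1) \<le> M"
    and y: "y \<in> cball x0 r" "\<sigma> y \<le> 0"
  shows "\<phi> y + \<epsilon> * (exp (- \<alpha> * \<sigma> y) - 1) \<le> M"
proof -
  let ?v = "\<lambda>y. \<phi> y + \<epsilon> * (exp (- \<alpha> * \<sigma> y) - 1)"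
  define K where "K = cball x0 r \<inter> \<sigma> -` {..0}"
  note cont = continuous_on_subset[OF Ck_on_2_continuous[OF _ V(1)] V(2)]
  have "compact K" unfolding K_def by (rule compact_cball_sublevel[OF cont[OF C2(2)]])
  moreover have "continuous_on K ?v"
    by (intro continuous_intros continuous_on_subset[OF cont[OF C2(1)]] continuous_on_subset[OF cont[OF C2(2)]])
      (auto simp: K_def)
  ultimately obtain xm where xm: "xm \<in> K" "\<And>z. z \<in> K \<Longrightarrow> ?v z \<le> ?v xm"
    using continuous_attains_sup[of K ?v] y unfolding K_def by blast
  have "?v xm \<le> M"
  proof (cases "\<sigma> xm = 0 \<or> dist x0 xm = r")
    case True
    then show ?thesis using bdry xm(1) unfolding K_def by auto
  next
    case False
    define N where "N = ball x0 r \<inter> \<sigma> -` {..<0}"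
    have "N \<subseteq> V" "N \<subseteq> K" using V(2) unfolding N_def K_def by auto
    have "open N"
      unfolding N_def
      by (rule continuous_open_preimage[OF continuous_on_subset[OF cont[OF C2(2)] ball_subset_cball]
            open_ball open_lessThan])
    moreover have "xm \<in> N" using False xm(1) unfolding K_def N_def by auto
    ultimately obtain z where "z \<in> N" "?v xm < ?v z"
      using exp_barrier_not_local_max[OF _ _ Ck_on_subset[OF C2(1) \<open>N \<subseteq> V\<close>] Ck_on_subset[OF C2(2) \<open>N \<subseteq> V\<close>]
          lap[of xm] \<alpha>(2)[of xm] \<alpha>(1) \<open>\<epsilon> > 0\<close>] unfolding N_def by auto
    then show ?thesis using xm(2) \<open>N \<subseteq> K\<close> by fastforce
  qed
  then show ?thesis using xm(2) y unfolding K_def by fastforce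
qed

lemma hopf_barrier_ray:
  fixes \<phi> \<sigma> :: "'a::euclidean_space \<Rightarrow> real"
  assumes d\<phi>: "\<phi> differentiable (at x0)" and d\<sigma>: "\<sigma> differentiable (at x0)"
    and "\<sigma> x0 = 0" "grad \<sigma> x0 \<noteq> 0" "r > 0"
    and bound: "\<And>y. y \<in> cball x0 r \<Longrightarrow> \<sigma> y \<le> 0 \<Longrightarrow> \<phi> y + \<epsilon> * (exp (- \<alpha> * \<sigma> y) - 1) \<le> \<phi> x0"
  shows "\<epsilon> * \<alpha> * (norm (grad \<sigma> x0))\<^sup>2 \<le> frechet_derivative \<phi> (at x0) (grad \<sigma> x0)"
proof -
  define G where "G = grad \<sigma> x0"
  let ?v = "\<lambda>y. \<phi> y + \<epsilon> * (exp (- \<alpha> * \<sigma> y) - 1)"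
  have D\<sigma>: "frechet_derivative \<sigma> (at x0) (- G) = - (norm G)\<^sup>2"
    unfolding frechet_derivative_eq_inner_grad[OF d\<sigma>] G_def by (simp add: power2_norm_eq_inner)
  have "((\<lambda>s. \<sigma> (x0 + s *\<^sub>R (- G))) has_real_derivative - (norm G)\<^sup>2) (at 0)"
    using has_real_derivative_along_line[of \<sigma> x0 0 "- G"] d\<sigma> D\<sigma> by simp
  moreover have "- (norm G)\<^sup>2 < 0" using assms(4) unfolding G_def by simp
  ultimately obtain d where d: "d > 0" "\<And>s. 0 < s \<Longrightarrow> s < d \<Longrightarrow> \<sigma> (x0 + (0 + s) *\<^sub>R (- G)) < \<sigma> (x0 + 0 *\<^sub>R (- G))"
    by (blast dest: DERIV_neg_dec_right)
  define \<delta> where "\<delta> = min d (r / (norm G + 1))"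
  have "norm G + 1 > 0" by (simp add: add_nonneg_pos)
  then have "\<delta> > 0" using d \<open>r > 0\<close> unfolding \<delta>_def by simp
  have ray: "x0 + s *\<^sub>R (- G) \<in> cball x0 r" if "0 < s" "s < \<delta>" for s
  proof -
    have "s * norm G \<le> r / (norm G + 1) * norm G"
      using that unfolding \<delta>_def by (intro mult_right_mono) auto
    also have "\<dots> \<le> r" using \<open>r > 0\<close> \<open>norm G + 1 > 0\<close> by (simp add: field_simps)
    finally show ?thesis using that by (simp add: dist_norm)
  qed
  have "frechet_derivative ?v (at x0) (- G) \<le> 0"
  proof (rule frechet_derivative_nonpos_at_ray_max[OF _ \<open>\<delta> > 0\<close>])
    show "?v differentiable (at x0)"
      using has_derivative_exp_barrier[OF has_derivative_frechet_derivative[OF d\<phi>]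
          has_derivative_frechet_derivative[OF d\<sigma>]] unfolding differentiable_def by blast
    show "?v (x0 + s *\<^sub>R - G) \<le> ?v x0" if "0 < s" "s < \<delta>" for s
      using bound[OF ray[OF that]] d(2)[of s] that \<open>\<sigma> x0 = 0\<close> unfolding \<delta>_def by auto
  qed
  moreover have "frechet_derivative ?v (at x0) (- G) = - frechet_derivative \<phi> (at x0) G + \<epsilon> * \<alpha> * (norm G)\<^sup>2"
    using frechet_derivative_eqI[OF has_derivative_exp_barrier[OF has_derivative_frechet_derivative[OF d\<phi>]
          has_derivative_frechet_derivative[OF d\<sigma>]]] D\<sigma> \<open>\<sigma> x0 = 0\<close>
      linear_neg[OF linear_frechet_derivative[OF d\<phi>]]
    by simp
  ultimately show ?thesis unfolding G_def by simp
qed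

lemma hopf_lemma:
  fixes \<phi> \<sigma> :: "'a::euclidean_space \<Rightarrow> real"
  assumes V: "open V" "cball x0 r0 \<subseteq> V" "r0 > 0" and C2: "Ck_on 2 V \<phi>" "Ck_on 2 V \<sigma>"
    and \<sigma>: "\<sigma> x0 = 0" "grad \<sigma> x0 \<noteq> 0"
    and le: "\<And>x. x \<in> cball x0 r0 \<Longrightarrow> \<sigma> x \<le> 0 \<Longrightarrow> \<phi> x \<le> \<phi> x0"
    and lt: "\<And>x. x \<in> cball x0 r0 \<Longrightarrow> x \<noteq> x0 \<Longrightarrow> \<sigma> x \<le> 0 \<Longrightarrow> \<phi> x < \<phi> x0"
    and lap: "\<And>x. x \<in> ball x0 r0 \<Longrightarrow> \<sigma> x < 0 \<Longrightarrow> 0 \<le> lap \<phi> x"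
  shows "frechet_derivative \<phi> (at x0) (grad \<sigma> x0) > 0"
proof -
  have "x0 \<in> V" using V by auto
  obtain \<alpha> r1 where \<alpha>: "\<alpha> > 0" "r1 > 0" "cball x0 r1 \<subseteq> V"
    "\<And>y. y \<in> cball x0 r1 \<Longrightarrow> lap \<sigma> y < \<alpha> * (norm (grad \<sigma> y))\<^sup>2"
    using hopf_barrier_exponent[OF V(1) \<open>x0 \<in> V\<close> C2(2) \<sigma>(2)] by blast
  define r where "r = min r0 r1"
  have r: "r > 0" "cball x0 r \<subseteq> cball x0 r0" "cball x0 r \<subseteq> cball x0 r1" "cball x0 r \<subseteq> V"
    "ball x0 r \<subseteq> ball x0 r0"
    using V \<alpha> unfolding r_def by auto
  note cont = continuous_on_subset[OF Ck_on_2_continuous[OF _ V(1)] r(4)]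
  obtain \<epsilon> where \<epsilon>: "\<epsilon> > 0" "\<And>y. y \<in> cball x0 r \<Longrightarrow> \<sigma> y \<le> 0 \<Longrightarrow> \<sigma> y = 0 \<or> dist x0 y = r \<Longrightarrow>
      \<phi> y + \<epsilon> * (exp (- \<alpha> * \<sigma> y) - 1) \<le> \<phi> x0"
    using hopf_barrier_boundary_bound[OF cont[OF C2(1)] cont[OF C2(2)] r(1), of \<alpha>] le lt r(2) by blast
  have "\<phi> y + \<epsilon> * (exp (- \<alpha> * \<sigma> y) - 1) \<le> \<phi> x0" if "y \<in> cball x0 r" "\<sigma> y \<le> 0" for y
  proof (rule hopf_barrier_max_on_boundary[OF V(1) r(4) C2 \<alpha>(1) _ \<epsilon>(1) _ \<epsilon>(2) that])
    show "lap \<sigma> z < \<alpha> * (norm (grad \<sigma> z))\<^sup>2" if "z \<in> cball x0 r" for z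
      using \<alpha>(4) r(3) that by blast
    show "0 \<le> lap \<phi> z" if "z \<in> ball x0 r" "\<sigma> z < 0" for z
      using lap r(5) that by blast
  qed
  (* The barrier phi + eps (exp (- alpha sigma) - 1) equals phi x0 at x0 and is <= phi x0 on the
     sublevel set of sigma, so its derivative in direction - grad sigma is <= 0. *)
  from hopf_barrier_ray[OF Ck_on_2_differentiable[OF C2(1) V(1) \<open>x0 \<in> V\<close>]
      Ck_on_2_differentiable[OF C2(2) V(1) \<open>x0 \<in> V\<close>] \<sigma> r(1) this]
  have "\<epsilon> * \<alpha> * (norm (grad \<sigma> x0))\<^sup>2 \<le> frechet_derivative \<phi> (at x0) (grad \<sigma> x0)" .
  moreover have "0 < \<epsilon> * \<alpha> * (norm (grad \<sigma> x0))\<^sup>2" using \<epsilon>(1) \<alpha>(1) \<sigma>(2) by simp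
  ultimately show ?thesis by linarith
qed

lemma hopf_interior_ball:
  fixes \<phi> :: "'a::euclidean_space \<Rightarrow> real"
  assumes V: "open V" "cball z r \<subseteq> V" "r > 0" and C2: "Ck_on 2 V \<phi>"
    and R: "dist y z = R" "R > 0"
    and le: "\<And>x. x \<in> cball z r \<Longrightarrow> \<phi> x \<le> \<phi> z"
    and lt: "\<And>x. x \<in> ball y R \<Longrightarrow> \<phi> x < \<phi> z"
    and lap: "\<And>x. x \<in> ball y R \<Longrightarrow> 0 \<le> lap \<phi> x"
  shows "frechet_derivative \<phi> (at z) (z - y) > 0"
proof -
  define \<sigma> where "\<sigma> x = ((x - y) \<bullet> (x - y) - R\<^sup>2) + (x - z) \<bullet> (x - z)" for x
  have sq0: "Ck_on 2 V (\<lambda>x. (x - z) \<bullet> (x - z))" "grad (\<lambda>x. (x - z) \<bullet> (x - z)) z = 0"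
    "(\<lambda>x. (x - z) \<bullet> (x - z)) differentiable (at z)"
    using Ck_on_2_sq_dist[of V z 0] grad_sq_dist[of z 0 z] has_derivative_sq_dist[of z 0 z]
    by (auto simp: differentiable_def)
  have "Ck_on 2 V \<sigma>"
    unfolding \<sigma>_def[abs_def] by (rule Ck_on_add[OF Ck_on_2_sq_dist sq0(1) V(1)])
  have sq: "(x - y) \<bullet> (x - y) = (dist y x)\<^sup>2" for x y :: 'a
    by (simp add: dot_square_norm dist_norm norm_minus_commute)
  have inside: "dist y x < R" if "\<sigma> x < 0 \<or> (x \<noteq> z \<and> \<sigma> x \<le> 0)" for x
  proof -
    have "0 \<le> (dist z x)\<^sup>2" "x \<noteq> z \<Longrightarrow> 0 < (dist z x)\<^sup>2" by auto
    then have "(dist y x)\<^sup>2 < R\<^sup>2" using that unfolding \<sigma>_def sq by linarith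
    then show ?thesis using R(2) by (simp add: power_less_imp_less_base)
  qed
  have grad: "grad \<sigma> z = 2 *\<^sub>R (z - y)"
    unfolding \<sigma>_def[abs_def] using has_derivative_sq_dist[of y "R\<^sup>2" z] sq0(3)
    by (subst grad_add) (auto simp: differentiable_def grad_sq_dist sq0(2))
  have "0 < frechet_derivative \<phi> (at z) (grad \<sigma> z)"
  proof (rule hopf_lemma[OF V C2 \<open>Ck_on 2 V \<sigma>\<close>])
    show "grad \<sigma> z \<noteq> 0" unfolding grad using R by auto
    show "\<sigma> z = 0" unfolding \<sigma>_def sq R(1) by simp
    show "\<phi> x < \<phi> z" if "x \<in> cball z r" "x \<noteq> z" "\<sigma> x \<le> 0" for x
      using lt inside that by simp
    show "0 \<le> lap \<phi> x" if "x \<in> ball z r" "\<sigma> x < 0" for x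
      using lap inside that by simp
  qed (use le in auto)
  then show ?thesis
    unfolding grad
    using linear_scale[OF linear_frechet_derivative[OF Ck_on_2_differentiable[OF C2 V(1)]], of z 2 "z - y"] V
    by (simp add: zero_less_mult_iff subset_iff)
qed

section \<open>Maximum principles for subharmonic functions\<close>

lemma subharmonic_touching_ball_absurd:
  fixes \<phi> :: "'a::euclidean_space \<Rightarrow> real"
  assumes \<Omega>: "open \<Omega>" "open V" "\<Omega> \<subseteq> V" and C2: "Ck_on 2 V \<phi>"
    and lap: "\<And>x. x \<in> \<Omega> \<Longrightarrow> 0 \<le> lap \<phi> x" and le: "\<And>x. x \<in> \<Omega> \<Longrightarrow> \<phi> x \<le> M"
    and z: "z \<in> \<Omega>" "\<phi> z = M" and R: "dist y z = R" "R > 0" "ball y R \<subseteq> \<Omega>"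
    and lt: "\<And>x. x \<in> ball y R \<Longrightarrow> \<phi> x < M"
  shows False
proof -
  obtain r where r: "r > 0" "cball z r \<subseteq> \<Omega>"
    using \<Omega>(1) z(1) open_contains_cball by blast
  have "frechet_derivative \<phi> (at z) (z - y) > 0"
    using hopf_interior_ball[OF \<Omega>(2) _ r(1) C2 R(1,2)] r(2) \<Omega>(3) le lt lap R(3) z(2) by blast
  moreover have "eventually (\<lambda>x. \<phi> x \<le> \<phi> z) (at z)"
    using eventually_at_in_open'[OF \<Omega>(1) z(1)] by eventually_elim (use le z(2) in auto)
  then have "frechet_derivative \<phi> (at z) = (\<lambda>h. 0)"
    using has_derivative_local_max has_derivative_frechet_derivative
      Ck_on_2_differentiable[OF C2 \<Omega>(2)] z(1) \<Omega>(3) by blast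
  ultimately show False by simp
qed

lemma nearest_point_of_level_set:
  fixes \<phi> :: "'a::euclidean_space \<Rightarrow> real"
  assumes "continuous_on (cball y r) \<phi>" "z0 \<in> cball y r" "\<phi> z0 = M"
  obtains z where "z \<in> cball y r" "\<phi> z = M" "dist y z \<le> dist y z0"
    "\<And>x. dist y x < dist y z \<Longrightarrow> \<phi> x \<noteq> M"
proof -
  define Z where "Z = cball y r \<inter> \<phi> -` {M}"
  have "closed Z"
    unfolding Z_def by (rule continuous_closed_preimage[OF assms(1) closed_cball closed_singleton])
  moreover have "z0 \<in> Z" using assms(2,3) unfolding Z_def by simp
  ultimately obtain z where z: "z \<in> Z" "\<And>x. x \<in> Z \<Longrightarrow> dist y z \<le> dist y x"
    using distance_attains_inf[of Z y] by blast
  show ?thesis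
  proof (rule that)
    show "z \<in> cball y r" "\<phi> z = M" using z(1) unfolding Z_def by auto
    show "dist y z \<le> dist y z0" using z(2) \<open>z0 \<in> Z\<close> .
    show "\<phi> x \<noteq> M" if "dist y x < dist y z" for x
    proof
      assume "\<phi> x = M"
      moreover have "x \<in> cball y r" using that \<open>z \<in> cball y r\<close> by simp
      ultimately show False using z(2)[of x] that unfolding Z_def by simp
    qed
  qed
qed

lemma subharmonic_max_set_open:
  fixes \<phi> :: "'a::euclidean_space \<Rightarrow> real"
  assumes \<Omega>: "open \<Omega>" "open V" "\<Omega> \<subseteq> V" and C2: "Ck_on 2 V \<phi>"
    and lap: "\<And>x. x \<in> \<Omega> \<Longrightarrow> 0 \<le> lap \<phi> x" and le: "\<And>x. x \<in> \<Omega> \<Longrightarrow> \<phi> x \<le> M"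
  shows "open {x \<in> \<Omega>. \<phi> x = M}"
  unfolding open_contains_ball
proof (intro ballI)
  fix z0 assume z0: "z0 \<in> {x \<in> \<Omega>. \<phi> x = M}"
  obtain e where e: "e > 0" "cball z0 e \<subseteq> \<Omega>"
    using \<Omega>(1) z0 open_contains_cball by blast
  define r where "r = e / 2"
  have "r > 0" using e unfolding r_def by simp
  show "\<exists>e>0. ball z0 e \<subseteq> {x \<in> \<Omega>. \<phi> x = M}"
  proof (rule ccontr)
    assume "\<not> ?thesis"
    then have "\<not> ball z0 r \<subseteq> {x \<in> \<Omega>. \<phi> x = M}" using \<open>r > 0\<close> by blast
    then obtain y where y: "y \<in> ball z0 r" "y \<notin> {x \<in> \<Omega>. \<phi> x = M}" by blast
    have cby: "cball y r \<subseteq> \<Omega>"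
    proof
      fix x assume "x \<in> cball y r"
      then have "dist z0 x \<le> e"
        using dist_triangle[of z0 x y] y(1) unfolding r_def by simp
      then show "x \<in> \<Omega>" using e(2) by auto
    qed
    moreover have "y \<in> cball y r" using \<open>r > 0\<close> by simp
    ultimately have "\<phi> y \<noteq> M" using y(2) by blast
    have "continuous_on (cball y r) \<phi>"
      using continuous_on_subset[OF Ck_on_2_continuous[OF C2 \<Omega>(2)]] cby \<Omega>(3) by blast
    moreover have "z0 \<in> cball y r" using y(1) by (simp add: dist_commute)
    ultimately obtain z where z: "z \<in> cball y r" "\<phi> z = M" "dist y z \<le> dist y z0"
      "\<And>x. dist y x < dist y z \<Longrightarrow> \<phi> x \<noteq> M"
      using nearest_point_of_level_set z0 by blast
    show False
    proof (rule subharmonic_touching_ball_absurd[OF \<Omega> C2 lap le _ z(2) refl])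
      show "z \<in> \<Omega>" using z(1) cby by blast
      show "dist y z > 0" using z(2) \<open>\<phi> y \<noteq> M\<close> by auto
      show "ball y (dist y z) \<subseteq> \<Omega>" using cby z(1) by auto
      show "\<phi> x < M" if "x \<in> ball y (dist y z)" for x
      proof -
        have "dist y x < dist y z" using that by simp
        moreover have "x \<in> \<Omega>" using that cby z(1) by auto
        ultimately show ?thesis using z(4)[of x] le[of x] by linarith
      qed
    qed
  qed
qed

lemma subharmonic_strong_max_principle:
  fixes \<phi> :: "'a::euclidean_space \<Rightarrow> real"
  assumes \<Omega>: "open \<Omega>" "connected \<Omega>" "open V" "\<Omega> \<subseteq> V" and C2: "Ck_on 2 V \<phi>"
    and lap: "\<And>x. x \<in> \<Omega> \<Longrightarrow> 0 \<le> lap \<phi> x"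
    and max: "x0 \<in> \<Omega>" "\<And>x. x \<in> \<Omega> \<Longrightarrow> \<phi> x \<le> \<phi> x0" and x: "x \<in> \<Omega>"
  shows "\<phi> x = \<phi> x0"
proof -
  let ?S = "{x \<in> \<Omega>. \<phi> x = \<phi> x0}"
  have "openin (top_of_set \<Omega>) ?S"
    using subharmonic_max_set_open[OF \<Omega>(1,3,4) C2 lap max(2)] by (auto intro: open_subset)
  moreover have "closedin (top_of_set \<Omega>) ?S"
    using continuous_closedin_preimage_constant
      continuous_on_subset[OF Ck_on_2_continuous[OF C2 \<Omega>(3)] \<Omega>(4)] by blast
  moreover have "?S \<noteq> {}" using max(1) by auto
  ultimately have "?S = \<Omega>" using \<Omega>(2) unfolding connected_clopen by blast
  then show ?thesis using x by blast
qed

lemma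
  fixes \<Omega> :: "'a::euclidean_space set"
  assumes "smooth_domain \<Omega> \<rho>"
  shows smooth_domain_open: "open \<Omega>"
    and smooth_domain_Ck_on_2: "Ck_on 2 UNIV \<rho>"
    and smooth_domain_compact_closure: "compact (closure \<Omega>)"
    and smooth_domain_frontier: "x \<in> frontier \<Omega> \<Longrightarrow> \<rho> x = 0 \<and> grad \<rho> x \<noteq> 0"
proof -
  have sm: "smooth_on UNIV \<rho>" and eq: "\<Omega> = {x. \<rho> x < 0}"
    using assms unfolding smooth_domain_def by auto
  show C2: "Ck_on 2 UNIV \<rho>" using sm unfolding smooth_on_def by blast
  note ct = Ck_on_2_continuous[OF C2 open_UNIV]
  show "open \<Omega>"
    unfolding eq using continuous_open_preimage[OF ct open_UNIV open_lessThan[of 0]] by (simp add: vimage_def)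
  have "closed {x. \<rho> x \<le> 0}"
    using continuous_closed_preimage[OF ct closed_UNIV closed_atMost[of 0]] by (simp add: vimage_def)
  then have "closure \<Omega> \<subseteq> {x. \<rho> x \<le> 0}" by (intro closure_minimal) (auto simp: eq)
  moreover assume "x \<in> frontier \<Omega>"
  then have "x \<in> closure \<Omega>" "x \<notin> \<Omega>"
    using \<open>open \<Omega>\<close> by (auto simp: frontier_def interior_open)
  ultimately have "\<rho> x = 0" unfolding eq by force
  then show "\<rho> x = 0 \<and> grad \<rho> x \<noteq> 0" using assms unfolding smooth_domain_def by auto
next
  have "bounded \<Omega>" using assms unfolding smooth_domain_def by blast
  then show "compact (closure \<Omega>)" by (simp add: compact_closure)
qed

lemma hopf_boundary_point:
  fixes \<Omega> :: "'a::euclidean_space set" and \<phi> :: "'a \<Rightarrow> real"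
  assumes dom: "smooth_domain \<Omega> \<rho>" and V: "open V" "closure \<Omega> \<subseteq> V" and C2: "Ck_on 2 V \<phi>"
    and x0: "x0 \<in> frontier \<Omega>"
    and le: "\<And>x. x \<in> closure \<Omega> \<Longrightarrow> \<phi> x \<le> \<phi> x0" and lt: "\<And>x. x \<in> \<Omega> \<Longrightarrow> \<phi> x < \<phi> x0"
    and lap: "\<And>x. x \<in> \<Omega> \<Longrightarrow> 0 \<le> lap \<phi> x"
  shows "frechet_derivative \<phi> (at x0) (grad \<rho> x0) > 0"
proof -
  have \<Omega>: "\<Omega> = {x. \<rho> x < 0}" using dom unfolding smooth_domain_def by auto
  note \<rho>0 = smooth_domain_frontier[OF dom x0]
  have "x0 \<in> V" using x0 V(2) closure_Un_frontier by blast
  then obtain r0 where r0: "r0 > 0" "cball x0 r0 \<subseteq> V" using V(1) open_contains_cball by blast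
  define \<sigma> where "\<sigma> x = \<rho> x + (x - x0) \<bullet> (x - x0)" for x
  have sq0: "Ck_on 2 V (\<lambda>x. (x - x0) \<bullet> (x - x0))" "grad (\<lambda>x. (x - x0) \<bullet> (x - x0)) x0 = 0"
    "(\<lambda>x. (x - x0) \<bullet> (x - x0)) differentiable (at x0)"
    using Ck_on_2_sq_dist[of V x0 0] grad_sq_dist[of x0 0 x0] has_derivative_sq_dist[of x0 0 x0]
    by (auto simp: differentiable_def)
  note C2\<rho> = Ck_on_subset[OF smooth_domain_Ck_on_2[OF dom], of V]
  have "Ck_on 2 V \<sigma>" unfolding \<sigma>_def[abs_def] using C2\<rho> sq0(1) V(1) by (simp add: Ck_on_add)
  have grad: "grad \<sigma> x0 = grad \<rho> x0"
    unfolding \<sigma>_def[abs_def]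
    using grad_add[OF Ck_on_2_differentiable[OF smooth_domain_Ck_on_2[OF dom] open_UNIV] sq0(3)] sq0(2)
    by simp
  have in\<Omega>: "x \<in> \<Omega>" if "\<sigma> x < 0 \<or> (x \<noteq> x0 \<and> \<sigma> x \<le> 0)" for x
  proof -
    have "0 \<le> (x - x0) \<bullet> (x - x0)" "x \<noteq> x0 \<Longrightarrow> 0 < (x - x0) \<bullet> (x - x0)" by auto
    with that have "\<rho> x < 0" unfolding \<sigma>_def by (elim disjE conjE) linarith+
    then show ?thesis unfolding \<Omega> by simp
  qed
  have "0 < frechet_derivative \<phi> (at x0) (grad \<sigma> x0)"
  proof (rule hopf_lemma[OF V(1) r0(2) r0(1) C2 \<open>Ck_on 2 V \<sigma>\<close>])
    show "\<sigma> x0 = 0" "grad \<sigma> x0 \<noteq> 0" using \<rho>0 grad unfolding \<sigma>_def by auto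
    show "\<phi> x \<le> \<phi> x0" if "x \<in> cball x0 r0" "\<sigma> x \<le> 0" for x
      using in\<Omega>[of x] that le[of x] closure_subset by (cases "x = x0") auto
  qed (use in\<Omega> lt lap in auto)
  then show ?thesis unfolding grad .
qed

lemma subharmonic_neumann_grad_zero:
  fixes \<Omega> :: "'a::euclidean_space set" and \<phi> :: "'a \<Rightarrow> real"
  assumes dom: "smooth_domain \<Omega> \<rho>" and V: "open V" "closure \<Omega> \<subseteq> V" and C2: "Ck_on 2 V \<phi>"
    and lap: "\<And>x. x \<in> \<Omega> \<Longrightarrow> 0 \<le> lap \<phi> x"
    and neumann: "\<And>x. x \<in> frontier \<Omega> \<Longrightarrow> frechet_derivative \<phi> (at x) (grad \<rho> x) = 0"
    and x: "x \<in> \<Omega>"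
  shows "grad \<phi> x = 0"
proof -
  note \<Omega> = smooth_domain_open[OF dom] smooth_domain_compact_closure[OF dom]
  have "connected \<Omega>" using dom unfolding smooth_domain_def by auto
  have \<Omega>V: "\<Omega> \<subseteq> V" using V(2) closure_subset by blast
  obtain xM where xM: "xM \<in> closure \<Omega>" "\<And>y. y \<in> closure \<Omega> \<Longrightarrow> \<phi> y \<le> \<phi> xM"
    using continuous_attains_sup[OF \<Omega>(2) _ continuous_on_subset[OF Ck_on_2_continuous[OF C2 V(1)] V(2)]] x
      closure_subset by blast
  have const: "\<phi> y = \<phi> xM" if "y \<in> \<Omega>" for y
  proof (cases "\<exists>x1\<in>\<Omega>. \<phi> x1 = \<phi> xM")
    case True
    then obtain x1 where "x1 \<in> \<Omega>" "\<phi> x1 = \<phi> xM" by blast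
    then show ?thesis
      using subharmonic_strong_max_principle[OF \<Omega>(1) \<open>connected \<Omega>\<close> V(1) \<Omega>V C2 lap \<open>x1 \<in> \<Omega>\<close> _ that]
        xM(2) closure_subset by auto
  next
    case False
    then have "xM \<in> frontier \<Omega>" using xM(1) \<Omega>(1) by (auto simp: frontier_def interior_open)
    moreover have "\<phi> y < \<phi> xM" if "y \<in> \<Omega>" for y
      using False xM(2)[of y] that closure_subset by fastforce
    ultimately have "frechet_derivative \<phi> (at xM) (grad \<rho> xM) > 0"
      using hopf_boundary_point[OF dom V C2 _ xM(2)] lap by blast
    then show ?thesis using neumann[OF \<open>xM \<in> frontier \<Omega>\<close>] by simp
  qed
  have "frechet_derivative \<phi> (at x) = frechet_derivative (\<lambda>_. \<phi> xM) (at x)"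
    by (rule frechet_derivative_transform_open[OF \<Omega>(1) x const])
  then show ?thesis unfolding grad_def by simp
qed

section \<open>The heat equation\<close>

lemma lap_nonpos_at_local_max:
  fixes f :: "'a::euclidean_space \<Rightarrow> real"
  assumes "\<delta> > 0" "\<And>y. y \<in> ball x \<delta> \<Longrightarrow> f differentiable (at y)"
    and "\<And>c. (\<lambda>y. frechet_derivative f (at y) c) differentiable (at x)"
    and "\<And>y. y \<in> ball x \<delta> \<Longrightarrow> f y \<le> f x"
  shows "lap f x \<le> 0"
  unfolding lap_def using second_frechet_derivative_nonpos_at_local_max[OF assms]
  by (simp add: sum_nonpos)

lemma heat_no_penalized_interior_max:
  fixes D :: "'a::euclidean_space \<Rightarrow> real \<Rightarrow> real"
  assumes D: "smooth_on U (\<lambda>z. D (fst z) (snd z))" "open U" "ball x \<delta> \<times> {t} \<subseteq> U"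
    and heat: "tderiv D x t = \<nu> * lap (\<lambda>y. D y t) x" and "\<nu> > 0" "\<epsilon> > 0" "\<delta> > 0"
    and space: "\<And>y. y \<in> ball x \<delta> \<Longrightarrow> D y t \<le> D x t"
    and time: "\<And>s. 0 < s \<Longrightarrow> s < \<delta> \<Longrightarrow> D x (t - s) \<le> D x t - \<epsilon> * s"
  shows False
proof -
  have xt: "(x, t) \<in> U" using D(3) \<open>\<delta> > 0\<close> by auto
  define \<Phi> where "\<Phi> = (\<lambda>z. D (fst z) (snd z))"
  let ?w = "\<lambda>z. \<Phi> z - \<epsilon> * snd z"
  have d\<Phi>: "\<Phi> differentiable (at (x, t))"
    using smooth_on_differentiable[OF D(1,2) xt] unfolding \<Phi>_def .
  have "frechet_derivative ?w (at (x, t)) (0, - 1) \<le> 0"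
  proof (rule frechet_derivative_nonpos_at_ray_max[OF _ \<open>\<delta> > 0\<close>])
    show "?w differentiable (at (x, t))"
      using d\<Phi> bounded_linear_imp_differentiable[OF bounded_linear_snd] by (auto intro!: derivative_intros)
    show "?w ((x, t) + s *\<^sub>R (0, - 1)) \<le> ?w (x, t)" if "0 < s" "s < \<delta>" for s
      using time[OF that] unfolding \<Phi>_def by (simp add: algebra_simps)
  qed
  moreover have "frechet_derivative ?w (at (x, t)) (0, - 1) = \<epsilon> - tderiv D x t"
    using frechet_derivative_eqI[OF has_derivative_diff[OF has_derivative_frechet_derivative[OF d\<Phi>]
          has_derivative_mult_right[OF has_derivative_snd[OF has_derivative_ident], of \<epsilon>]]]
      linear_neg[OF linear_frechet_derivative[OF d\<Phi>], of "(0, 1)"]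
      tderiv_eq_dds[OF D(1,2) xt]
    unfolding \<Phi>_def by simp
  moreover have "lap (\<lambda>y. D y t) x \<le> 0"
  proof (rule lap_nonpos_at_local_max[where f = "\<lambda>y. D y t", OF \<open>\<delta> > 0\<close> _ _ space])
    have S: "smooth_on {y. (y, t) \<in> U} (\<lambda>y. D y t)" "open {y. (y, t) \<in> U}"
      using smooth_on_curried_slice[OF D(1,2)] open_slice[OF D(2)] by auto
    show "(\<lambda>y. D y t) differentiable (at y)" if "y \<in> ball x \<delta>" for y
      using smooth_on_differentiable[OF S, of y] that D(3) by (auto simp: subset_iff)
    show "(\<lambda>y. frechet_derivative (\<lambda>y. D y t) (at y) c) differentiable (at x)" for c
      using smooth_on_dds_differentiable[OF S, of x "[c]"] xt by simp
  qed
  ultimately show False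
    using heat \<open>\<epsilon> > 0\<close> mult_nonneg_nonpos[of \<nu> "lap (\<lambda>y. D y t) x"] \<open>\<nu> > 0\<close> by simp
qed

lemma heat_weak_max_principle:
  fixes D :: "'a::euclidean_space \<Rightarrow> real \<Rightarrow> real" and \<Omega> :: "'a set"
  assumes \<Omega>: "open \<Omega>" "compact (closure \<Omega>)" and U: "open U" "closure \<Omega> \<times> {t0..} \<subseteq> U"
    and D: "smooth_on U (\<lambda>z. D (fst z) (snd z))" and "\<nu> > 0"
    and heat: "\<And>x t. x \<in> \<Omega> \<Longrightarrow> t > t0 \<Longrightarrow> tderiv D x t = \<nu> * lap (\<lambda>y. D y t) x"
    and bdry: "\<And>x t. x \<in> frontier \<Omega> \<Longrightarrow> t \<ge> t0 \<Longrightarrow> D x t \<le> 0"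
    and init: "\<And>x. x \<in> closure \<Omega> \<Longrightarrow> D x t0 \<le> 0"
    and x1: "x1 \<in> closure \<Omega>" "t1 \<ge> t0"
  shows "D x1 t1 \<le> 0"
proof (rule ccontr)
  assume "\<not> D x1 t1 \<le> 0"
  then have "D x1 t1 > 0" by simp
  then have "t1 > t0" using init[OF x1(1)] x1(2) by (cases "t1 = t0") auto
  define K where "K = closure \<Omega> \<times> {t0..t1}"
  have "compact K" "K \<subseteq> U" "(x1, t1) \<in> K"
    unfolding K_def using \<Omega>(2) U(2) x1 by (auto intro: compact_Times)
  define \<epsilon> where "\<epsilon> = D x1 t1 / (2 * (t1 - t0))"
  have "\<epsilon> > 0" using \<open>D x1 t1 > 0\<close> \<open>t1 > t0\<close> unfolding \<epsilon>_def by simp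
  have "\<epsilon> * (t1 - t0) = D x1 t1 / 2" using \<open>t1 > t0\<close> unfolding \<epsilon>_def by (simp add: field_simps)
  then have "\<epsilon> * (t1 - t0) < D x1 t1" using \<open>D x1 t1 > 0\<close> by simp
  let ?w = "\<lambda>z. D (fst z) (snd z) - \<epsilon> * (snd z - t0)"
  have "continuous_on K ?w"
    by (intro continuous_intros continuous_on_subset[OF smooth_on_continuous[OF D] \<open>K \<subseteq> U\<close>,
          simplified])
  then obtain zm where zm: "zm \<in> K" "\<forall>z\<in>K. ?w z \<le> ?w zm"
    using continuous_attains_sup[OF \<open>compact K\<close>] \<open>(x1, t1) \<in> K\<close> by blast
  obtain xm tm where "zm = (xm, tm)" by (cases zm)
  with zm have max: "(xm, tm) \<in> K" "\<And>z. z \<in> K \<Longrightarrow> ?w z \<le> ?w (xm, tm)" by auto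
  have "?w (xm, tm) > 0" using max(2)[OF \<open>(x1, t1) \<in> K\<close>] \<open>\<epsilon> * (t1 - t0) < D x1 t1\<close> by simp
  have xm: "xm \<in> closure \<Omega>" "t0 \<le> tm" "tm \<le> t1" using max(1) unfolding K_def by auto
  have "tm > t0"
    using init[OF xm(1)] xm(2) \<open>?w (xm, tm) > 0\<close> by (cases "tm = t0") auto
  have "xm \<in> \<Omega>"
  proof (rule ccontr)
    assume "xm \<notin> \<Omega>"
    then have "D xm tm \<le> 0" using bdry xm \<Omega>(1) by (auto simp: frontier_def interior_open)
    moreover have "0 \<le> \<epsilon> * (tm - t0)" using \<open>\<epsilon> > 0\<close> xm(2) by simp
    ultimately show False using \<open>?w (xm, tm) > 0\<close> by simp
  qed
  then obtain \<delta>0 where "\<delta>0 > 0" "ball xm \<delta>0 \<subseteq> \<Omega>" using \<Omega>(1) openE by blast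
  define \<delta> where "\<delta> = min \<delta>0 (tm - t0)"
  have \<delta>: "\<delta> > 0" "ball xm \<delta> \<subseteq> \<Omega>" "\<delta> \<le> tm - t0"
    using \<open>\<delta>0 > 0\<close> \<open>tm > t0\<close> \<open>ball xm \<delta>0 \<subseteq> \<Omega>\<close> unfolding \<delta>_def by auto
  show False
  proof (rule heat_no_penalized_interior_max[OF D U(1) _ heat[OF \<open>xm \<in> \<Omega>\<close> \<open>tm > t0\<close>] \<open>\<nu> > 0\<close> \<open>\<epsilon> > 0\<close> \<delta>(1)])
    have "ball xm \<delta> \<times> {tm} \<subseteq> closure \<Omega> \<times> {t0..}" using \<delta>(2) xm(2) closure_subset by auto
    then show "ball xm \<delta> \<times> {tm} \<subseteq> U" using U(2) by blast
    show "D y tm \<le> D xm tm" if "y \<in> ball xm \<delta>" for y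
    proof -
      have "y \<in> closure \<Omega>" using that \<delta>(2) closure_subset by blast
      then have "(y, tm) \<in> K" unfolding K_def using xm by auto
      then show ?thesis using max(2) by fastforce
    qed
    show "D xm (tm - s) \<le> D xm tm - \<epsilon> * s" if "0 < s" "s < \<delta>" for s
      using max(2)[of "(xm, tm - s)"] that \<delta>(3) xm unfolding K_def by (simp add: algebra_simps)
  qed
qed

lemma heat_zero_data_imp_zero:
  fixes D :: "'a::euclidean_space \<Rightarrow> real \<Rightarrow> real" and \<Omega> :: "'a set"
  assumes \<Omega>: "open \<Omega>" "compact (closure \<Omega>)" and U: "open U" "closure \<Omega> \<times> {t0..} \<subseteq> U"
    and D: "smooth_on U (\<lambda>z. D (fst z) (snd z))" and "\<nu> > 0"
    and heat: "\<And>x t. x \<in> \<Omega> \<Longrightarrow> t > t0 \<Longrightarrow> tderiv D x t = \<nu> * lap (\<lambda>y. D y t) x"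
    and bdry: "\<And>x t. x \<in> frontier \<Omega> \<Longrightarrow> t \<ge> t0 \<Longrightarrow> D x t = 0"
    and init: "\<And>x. x \<in> closure \<Omega> \<Longrightarrow> D x t0 = 0"
    and x: "x \<in> closure \<Omega>" "t \<ge> t0"
  shows "D x t = 0"
proof -
  note neg = bounded_linear_minus[OF bounded_linear_ident]
  have N: "smooth_on U (\<lambda>z. - D (fst z) (snd z))"
    using smooth_on_bounded_linear[OF neg D U(1)] .
  have N_heat: "tderiv (\<lambda>x t. - D x t) x t = \<nu> * lap (\<lambda>y. - D y t) x" if "x \<in> \<Omega>" "t > t0" for x t
  proof -
    have xt: "(x, t) \<in> U" using U(2) that closure_subset by fastforce
    have "tderiv (\<lambda>x t. - D x t) x t = - tderiv D x t"
      using has_vector_derivative_minus[OF has_vector_derivative_tderiv[OF D U(1) xt]]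
      unfolding tderiv_def by (simp add: vector_derivative_at)
    moreover have "lap (\<lambda>y. - D y t) x = - lap (\<lambda>y. D y t) x"
      unfolding lap_eq_dds
      using dds_bounded_linear[OF neg smooth_on_curried_slice[OF D U(1)] open_slice[OF U(1)]] xt
      by (simp add: sum_negf del: dds.simps)
    ultimately show ?thesis using heat that by simp
  qed
  have "- D x t \<le> 0"
    by (rule heat_weak_max_principle[OF \<Omega> U N \<open>\<nu> > 0\<close> N_heat _ _ x]) (simp_all add: bdry init)
  moreover have "D x t \<le> 0"
    by (rule heat_weak_max_principle[OF \<Omega> U D \<open>\<nu> > 0\<close> heat _ _ x]) (simp_all add: bdry init)
  ultimately show ?thesis by simp
qed

section \<open>The GePUP-E formulation\<close>

locale gepup_e =
  fixes \<Omega> :: "'a::euclidean_space set" and \<rho> :: "'a \<Rightarrow> real" and n :: "'a \<Rightarrow> 'a"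
    and w u g :: "'a \<Rightarrow> real \<Rightarrow> 'a" and q :: "'a \<Rightarrow> real \<Rightarrow> real"
    and \<nu> lam t0 :: real and U :: "('a \<times> real) set"
  assumes dom: "smooth_domain \<Omega> \<rho>"
    and normal: "\<forall>x\<in>frontier \<Omega>. n x = outward_normal \<rho> x"
    and nu: "\<nu> > 0"
    and U: "open U" "closure \<Omega> \<times> {t0..} \<subseteq> U"
    and smooth: "smooth_on U (\<lambda>z. w (fst z) (snd z))" "smooth_on U (\<lambda>z. u (fst z) (snd z))"
      "smooth_on U (\<lambda>z. q (fst z) (snd z))" "smooth_on U (\<lambda>z. g (fst z) (snd z))"
    and evol: "\<forall>t\<ge>t0. \<forall>x\<in>\<Omega>. tderiv w x t =
        g x t - advect (\<lambda>y. u y t) (\<lambda>y. u y t) x - grad (\<lambda>y. q y t) x + \<nu> *\<^sub>R lap (\<lambda>y. w y t) x"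
    and w_bc: "\<forall>t\<ge>t0. \<forall>x\<in>frontier \<Omega>. (\<forall>\<tau>. \<tau> \<bullet> n x = 0 \<longrightarrow> w x t \<bullet> \<tau> = 0) \<and> dvg (\<lambda>y. w y t) x = 0"
    and proj: "\<forall>t\<ge>t0. leray_proj \<Omega> n (\<lambda>y. w y t) (\<lambda>y. u y t)"
    and u_bc: "\<forall>t\<ge>t0. \<forall>x\<in>frontier \<Omega>. u x t \<bullet> n x = 0"
    and q_eq: "\<forall>t\<ge>t0. \<forall>x\<in>\<Omega>. lap (\<lambda>y. q y t) x =
        dvg (\<lambda>y. g y t - advect (\<lambda>z. u z t) (\<lambda>z. u z t) y) x"
    and q_bc: "\<forall>t\<ge>t0. \<forall>x\<in>frontier \<Omega>. n x \<bullet> grad (\<lambda>y. q y t) x =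
        n x \<bullet> (g x t - advect (\<lambda>y. u y t) (\<lambda>y. u y t) x + \<nu> *\<^sub>R lap (\<lambda>y. w y t) x) + lam * (n x \<bullet> w x t)"
    and init: "\<forall>x\<in>closure \<Omega>. w x t0 = u x t0"
begin

definition evolution_rhs :: "real \<Rightarrow> 'a \<Rightarrow> 'a" where
  "evolution_rhs t x = g x t - advect (\<lambda>y. u y t) (\<lambda>y. u y t) x - grad (\<lambda>y. q y t) x + \<nu> *\<^sub>R lap (\<lambda>y. w y t) x"

lemma smooth_slices:
  shows open_slice_U: "open {y. (y, t) \<in> U}"
    and smooth_w_slice: "smooth_on {y. (y, t) \<in> U} (\<lambda>y. w y t)"
    and smooth_u_slice: "smooth_on {y. (y, t) \<in> U} (\<lambda>y. u y t)"
    and smooth_q_slice: "smooth_on {y. (y, t) \<in> U} (\<lambda>y. q y t)"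
    and smooth_g_slice: "smooth_on {y. (y, t) \<in> U} (\<lambda>y. g y t)"
  using open_slice[OF U(1)] smooth_on_curried_slice[OF smooth(1) U(1)] smooth_on_curried_slice[OF smooth(2) U(1)]
    smooth_on_curried_slice[OF smooth(3) U(1)] smooth_on_curried_slice[OF smooth(4) U(1)] by auto

lemma closure_subset_slice: "t \<ge> t0 \<Longrightarrow> closure \<Omega> \<subseteq> {y. (y, t) \<in> U}"
  using U(2) by auto

lemma mem_U: "x \<in> closure \<Omega> \<Longrightarrow> t \<ge> t0 \<Longrightarrow> (x, t) \<in> U"
  using U(2) by auto

lemma slice_differentiable:
  assumes "(x, t) \<in> U"
  shows "(\<lambda>y. w y t) differentiable (at x)" "(\<lambda>y. g y t) differentiable (at x)"
    "advect (\<lambda>y. u y t) (\<lambda>y. u y t) differentiable (at x)"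
    "grad (\<lambda>y. q y t) differentiable (at x)" "lap (\<lambda>y. w y t) differentiable (at x)"
  using smooth_on_differentiable[OF smooth_w_slice open_slice_U] smooth_on_differentiable[OF smooth_g_slice open_slice_U]
    advect_differentiable[OF smooth_u_slice smooth_u_slice open_slice_U]
    smooth_on_differentiable[OF smooth_on_grad[OF smooth_q_slice open_slice_U] open_slice_U]
    smooth_on_differentiable[OF smooth_on_lap[OF smooth_w_slice open_slice_U] open_slice_U] assms
  by simp_all

lemma continuous_on_evolution_rhs: "continuous_on {y. (y, t) \<in> U} (evolution_rhs t)"
  unfolding evolution_rhs_def[abs_def]
  using smooth_on_continuous[OF smooth_g_slice] continuous_on_advect[OF smooth_u_slice smooth_u_slice open_slice_U]
    smooth_on_continuous[OF smooth_on_grad[OF smooth_q_slice open_slice_U]]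
    smooth_on_continuous[OF smooth_on_lap[OF smooth_w_slice open_slice_U]]
  by (intro continuous_on_add continuous_on_diff continuous_on_scaleR continuous_on_const)

lemma tderiv_w_eq_evolution_rhs:
  assumes "t \<ge> t0" "x \<in> closure \<Omega>"
  shows "tderiv w x t = evolution_rhs t x"
proof (rule continuous_on_closure_eq[OF _ _ _ assms(2)])
  have "continuous_on {y. (y, t) \<in> U} (\<lambda>y. dds [(0, 1)] (\<lambda>z. w (fst z) (snd z)) (y, t))"
    using smooth_on_continuous[OF smooth_on_slice[OF smooth_on_dds[OF smooth(1)] U(1)]] .
  moreover have "tderiv w y t = dds [(0, 1)] (\<lambda>z. w (fst z) (snd z)) (y, t)" if "y \<in> {y. (y, t) \<in> U}" for y
    using tderiv_eq_dds[OF smooth(1) U(1)] that by (simp del: dds.simps)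
  ultimately have "continuous_on {y. (y, t) \<in> U} (\<lambda>y. tderiv w y t)"
    using continuous_on_cong[of _ _ "\<lambda>y. tderiv w y t"] by (metis (no_types, lifting))
  then show "continuous_on (closure \<Omega>) (\<lambda>y. tderiv w y t)"
    using closure_subset_slice[OF assms(1)] by (rule continuous_on_subset)
  show "continuous_on (closure \<Omega>) (evolution_rhs t)"
    using continuous_on_evolution_rhs closure_subset_slice[OF assms(1)] by (rule continuous_on_subset)
  show "tderiv w y t = evolution_rhs t y" if "y \<in> \<Omega>" for y
    using evol assms(1) that unfolding evolution_rhs_def by simp
qed

lemma leray_potential:
  assumes "t \<ge> t0"
  obtains V \<phi> where "open V" "closure \<Omega> \<subseteq> V" "Ck_on 2 V \<phi>"
    "\<And>x. x \<in> \<Omega> \<Longrightarrow> lap \<phi> x = dvg (\<lambda>y. w y t) x"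
    "\<And>x. x \<in> frontier \<Omega> \<Longrightarrow> n x \<bullet> grad \<phi> x = n x \<bullet> w x t"
    "\<And>x. x \<in> \<Omega> \<Longrightarrow> u x t = w x t - grad \<phi> x"
proof -
  have "leray_proj \<Omega> n (\<lambda>y. w y t) (\<lambda>y. u y t)" using proj assms by simp
  then obtain \<phi> V where "open V \<and> closure \<Omega> \<subseteq> V \<and> Ck_on 2 V \<phi> \<and>
      (\<forall>x\<in>\<Omega>. lap \<phi> x = dvg (\<lambda>y. w y t) x) \<and>
      (\<forall>x\<in>frontier \<Omega>. n x \<bullet> grad \<phi> x = n x \<bullet> w x t) \<and>
      (\<forall>x\<in>\<Omega>. u x t = w x t - grad \<phi> x)"
    unfolding leray_proj_def by blast
  then show ?thesis using that[of V \<phi>] by blast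
qed

lemma dvg_u_zero:
  assumes "t \<ge> t0" "x \<in> \<Omega>"
  shows "dvg (\<lambda>y. u y t) x = 0"
proof -
  obtain V \<phi> where V: "open V" "closure \<Omega> \<subseteq> V" "Ck_on 2 V \<phi>"
    and lap: "\<And>x. x \<in> \<Omega> \<Longrightarrow> lap \<phi> x = dvg (\<lambda>y. w y t) x"
    and "\<And>x. x \<in> frontier \<Omega> \<Longrightarrow> n x \<bullet> grad \<phi> x = n x \<bullet> w x t"
    and u_eq: "\<And>x. x \<in> \<Omega> \<Longrightarrow> u x t = w x t - grad \<phi> x"
    using leray_potential[OF assms(1)] by metis
  have "x \<in> V" using assms(2) V(2) closure_subset by blast
  note d\<phi>1 = Ck_on_2_differentiable_1[OF V(3) V(1) \<open>x \<in> V\<close>]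
  have "(x, t) \<in> U" using mem_U assms(1) \<open>x \<in> \<Omega>\<close> closure_subset by blast
  have "dvg (\<lambda>y. u y t) x = dvg (\<lambda>y. w y t - grad \<phi> y) x"
    by (rule dvg_cong_open[OF smooth_domain_open[OF dom] u_eq assms(2)])
  also have "\<dots> = dvg (\<lambda>y. w y t) x - lap \<phi> x"
    using dvg_diff[OF slice_differentiable(1)[OF \<open>(x, t) \<in> U\<close>] grad_differentiable[OF d\<phi>1]]
      dvg_grad_eq_lap[OF d\<phi>1] by simp
  finally show ?thesis using lap assms(2) by simp
qed

(* The pressure equation cancels the divergence of g - u.grad u. *)
lemma dvg_evolution_rhs:
  assumes "t \<ge> t0" "x \<in> \<Omega>"
  shows "dvg (evolution_rhs t) x = \<nu> * lap (\<lambda>y. dvg (\<lambda>y. w y t) y) x"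
proof -
  let ?A = "\<lambda>y. g y t - advect (\<lambda>y. u y t) (\<lambda>y. u y t) y"
  have xt: "(x, t) \<in> U" using mem_U assms closure_subset by blast
  note d = slice_differentiable[OF xt]
  have dA: "?A differentiable (at x)" using d(2,3) by (rule differentiable_diff)
  have dq1: "(\<lambda>y. frechet_derivative (\<lambda>y. q y t) (at y) c) differentiable (at x)" for c
    using smooth_on_dds_differentiable[OF smooth_q_slice[of t] open_slice_U[of t], of x "[c]"] xt by simp
  have "evolution_rhs t = (\<lambda>y. (?A y - grad (\<lambda>y. q y t) y) + \<nu> *\<^sub>R lap (\<lambda>y. w y t) y)"
    by (simp add: fun_eq_iff evolution_rhs_def)
  then have "dvg (evolution_rhs t) x = dvg ?A x - dvg (grad (\<lambda>y. q y t)) x + \<nu> * dvg (lap (\<lambda>y. w y t)) x"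
    using dvg_add[OF differentiable_diff[OF dA d(4)] differentiable_scaleR[OF differentiable_const d(5)]]
      dvg_diff[OF dA d(4)] dvg_scaleR[OF d(5)] by simp
  also have "dvg (grad (\<lambda>y. q y t)) x = dvg ?A x"
    using dvg_grad_eq_lap[OF dq1] q_eq assms by simp
  also have "dvg (lap (\<lambda>y. w y t)) x = lap (\<lambda>y. dvg (\<lambda>y. w y t) y) x"
    using lap_dvg_commute[OF smooth_w_slice[of t] open_slice_U[of t], of x] xt by simp
  finally show ?thesis by simp
qed

lemma dvg_w_heat:
  assumes "t > t0" "x \<in> \<Omega>"
  shows "tderiv (\<lambda>x t. dvg (\<lambda>y. w y t) x) x t = \<nu> * lap (\<lambda>y. dvg (\<lambda>y. w y t) y) x"
proof -
  have xt: "(x, t) \<in> U" using mem_U assms closure_subset by (blast intro: less_imp_le)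
  have "tderiv (\<lambda>x t. dvg (\<lambda>y. w y t) x) x t = dvg (\<lambda>y. tderiv w y t) x"
    by (rule tderiv_dvg_commute[OF smooth(1) U(1) xt])
  also have "\<dots> = dvg (evolution_rhs t) x"
  proof (rule dvg_cong_open[OF smooth_domain_open[OF dom] _ assms(2)])
    show "tderiv w y t = evolution_rhs t y" if "y \<in> \<Omega>" for y
      using tderiv_w_eq_evolution_rhs[of t y] assms(1) that closure_subset by auto
  qed
  also have "\<dots> = \<nu> * lap (\<lambda>y. dvg (\<lambda>y. w y t) y) x"
    using dvg_evolution_rhs assms by simp
  finally show ?thesis .
qed

lemma dvg_w_zero:
  assumes "t \<ge> t0" "x \<in> closure \<Omega>"
  shows "dvg (\<lambda>y. w y t) x = 0"
proof (rule heat_zero_data_imp_zero[where D = "\<lambda>x t. dvg (\<lambda>y. w y t) x",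
      OF smooth_domain_open[OF dom] smooth_domain_compact_closure[OF dom] U _ nu _ _ _ assms(2,1)])
  show "smooth_on U (\<lambda>z. dvg (\<lambda>y. w y (snd z)) (fst z))"
    by (rule smooth_on_dvg_slice[OF smooth(1) U(1)])
  show "tderiv (\<lambda>x t. dvg (\<lambda>y. w y t) x) x t = \<nu> * lap (\<lambda>y. dvg (\<lambda>y. w y t) y) x"
    if "x \<in> \<Omega>" "t > t0" for x t
    using dvg_w_heat that by simp
  show "dvg (\<lambda>y. w y t) x = 0" if "x \<in> frontier \<Omega>" "t \<ge> t0" for x t
    using w_bc that by simp
  show "dvg (\<lambda>y. w y t0) x = 0" if "x \<in> closure \<Omega>" for x
  proof (cases "x \<in> \<Omega>")
    case True
    have "dvg (\<lambda>y. w y t0) x = dvg (\<lambda>y. u y t0) x"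
    proof (rule dvg_cong_open[OF smooth_domain_open[OF dom] _ True])
      show "w y t0 = u y t0" if "y \<in> \<Omega>" for y using init that closure_subset by auto
    qed
    then show ?thesis using dvg_u_zero[OF order_refl True] by simp
  next
    case False
    then have "x \<in> frontier \<Omega>"
      using that smooth_domain_open[OF dom] by (simp add: frontier_def interior_open)
    then show ?thesis using w_bc by simp
  qed
qed

(* By the Neumann condition for q, the normal component of the evolution equation on the boundary
   reads (n.w)_t = - lam (n.w). *)
lemma normal_w_zero:
  assumes "t \<ge> t0" "x \<in> frontier \<Omega>"
  shows "n x \<bullet> w x t = 0"
proof (rule linear_ode_zero[where f = "\<lambda>s. n x \<bullet> w x s" and c = "- lam", OF _ _ assms(1)])
  have xc: "x \<in> closure \<Omega>" using assms(2) closure_Un_frontier by blast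
  show "((\<lambda>s. n x \<bullet> w x s) has_real_derivative - lam * (n x \<bullet> w x s)) (at s)" if "s \<ge> t0" for s
  proof -
    have "(x, s) \<in> U" using mem_U xc that by blast
    note hd = has_derivative_inner_right[OF has_vector_derivative_tderiv[OF smooth(1) U(1) this,
          unfolded has_vector_derivative_def], of "n x"]
    have "(\<lambda>r. n x \<bullet> (r *\<^sub>R tderiv w x s)) = (\<lambda>r. (n x \<bullet> tderiv w x s) * r)"
      by (simp add: fun_eq_iff mult.commute)
    then have "((\<lambda>s. n x \<bullet> w x s) has_real_derivative n x \<bullet> tderiv w x s) (at s)"
      using hd unfolding has_field_derivative_def by simp
    moreover have "n x \<bullet> tderiv w x s = - lam * (n x \<bullet> w x s)"
      using tderiv_w_eq_evolution_rhs[OF that xc] q_bc that assms(2) unfolding evolution_rhs_def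
      by (simp add: inner_diff_right inner_add_right)
    ultimately show ?thesis by simp
  qed
  show "n x \<bullet> w x t0 = 0" using init u_bc assms(2) xc by (simp add: inner_commute)
qed

lemma w_eq_u:
  assumes "t \<ge> t0" "x \<in> closure \<Omega>"
  shows "w x t = u x t"
proof -
  obtain V \<phi> where V: "open V" "closure \<Omega> \<subseteq> V" and C2: "Ck_on 2 V \<phi>"
    and lap: "\<And>x. x \<in> \<Omega> \<Longrightarrow> lap \<phi> x = dvg (\<lambda>y. w y t) x"
    and neu: "\<And>x. x \<in> frontier \<Omega> \<Longrightarrow> n x \<bullet> grad \<phi> x = n x \<bullet> w x t"
    and u_eq: "\<And>x. x \<in> \<Omega> \<Longrightarrow> u x t = w x t - grad \<phi> x"
    using leray_potential[OF assms(1)] by metis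
  have "grad \<phi> y = 0" if "y \<in> \<Omega>" for y
  proof (rule subharmonic_neumann_grad_zero[OF dom V C2 _ _ that])
    show "0 \<le> lap \<phi> y" if "y \<in> \<Omega>" for y
    proof -
      have "y \<in> closure \<Omega>" using that closure_subset by blast
      then show ?thesis using lap[OF that] dvg_w_zero[OF assms(1)] by simp
    qed
    show "frechet_derivative \<phi> (at y) (grad \<rho> y) = 0" if "y \<in> frontier \<Omega>" for y
    proof -
      have "y \<in> V" using that V(2) closure_Un_frontier by blast
      have "grad \<rho> y \<noteq> 0" using smooth_domain_frontier[OF dom that] by simp
      moreover have "n y = (1 / norm (grad \<rho> y)) *\<^sub>R grad \<rho> y"
        using normal that unfolding outward_normal_def by simp
      moreover have "n y \<bullet> grad \<phi> y = 0" using neu[OF that] normal_w_zero[OF assms(1) that] by simp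
      ultimately show ?thesis
        using frechet_derivative_eq_inner_grad[OF Ck_on_2_differentiable[OF C2 V(1) \<open>y \<in> V\<close>]]
        by (simp add: inner_commute)
    qed
  qed
  then have "w y t = u y t" if "y \<in> \<Omega>" for y using u_eq that by simp
  moreover have "continuous_on (closure \<Omega>) (\<lambda>y. w y t)" "continuous_on (closure \<Omega>) (\<lambda>y. u y t)"
    using smooth_on_continuous[OF smooth_w_slice] smooth_on_continuous[OF smooth_u_slice]
      closure_subset_slice[OF assms(1)] by (auto intro: continuous_on_subset)
  ultimately show ?thesis using continuous_on_closure_eq assms(2) by blast
qed

lemma navier_stokes:
  assumes "t \<ge> t0" "x \<in> \<Omega>"
  shows "tderiv u x t + advect (\<lambda>y. u y t) (\<lambda>y. u y t) x =
    g x t - grad (\<lambda>y. q y t) x + \<nu> *\<^sub>R lap (\<lambda>y. u y t) x"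
proof -
  have xc: "x \<in> closure \<Omega>" using assms(2) closure_subset by blast
  note xt = mem_U[OF xc assms(1)]
  have "tderiv u x t = tderiv w x t"
    using vector_derivative_unique_on_halfline[OF has_vector_derivative_tderiv[OF smooth(2) U(1) xt]
        has_vector_derivative_tderiv[OF smooth(1) U(1) xt] _ assms(1)] w_eq_u[OF _ xc] by simp
  moreover have "lap (\<lambda>y. u y t) x = lap (\<lambda>y. w y t) x"
  proof (rule lap_cong_open[OF smooth_domain_open[OF dom] _ assms(2)])
    show "u y t = w y t" if "y \<in> \<Omega>" for y
    proof -
      have "y \<in> closure \<Omega>" using that closure_subset by blast
      then show ?thesis using w_eq_u[OF assms(1)] by simp
    qed
  qed
  ultimately show ?thesis using evol assms by (simp add: algebra_simps)
qed

lemma u_frontier_zero: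
  assumes "t \<ge> t0" "x \<in> frontier \<Omega>"
  shows "u x t = 0"
proof -
  have "w x t \<bullet> w x t = 0" using w_bc assms normal_w_zero[OF assms] by (simp add: inner_commute)
  moreover have "x \<in> closure \<Omega>" using assms(2) closure_Un_frontier by blast
  ultimately show ?thesis using w_eq_u[OF assms(1)] by simp
qed

end

theorem lemma6:
  fixes \<Omega> :: "'a::euclidean_space set" and \<rho> :: "'a \<Rightarrow> real" and n :: "'a \<Rightarrow> 'a"
    and w u g :: "'a \<Rightarrow> real \<Rightarrow> 'a" and q :: "'a \<Rightarrow> real \<Rightarrow> real"
    and \<nu> lam t0 :: real and U :: "('a \<times> real) set"
  assumes dim: "DIM('a) \<ge> 2"
    and dom: "smooth_domain \<Omega> \<rho>"
    and normal: "\<forall>x\<in>frontier \<Omega>. n x = outward_normal \<rho> x"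
    and nu: "\<nu> > 0" and lam: "lam \<ge> 0"
    and U: "open U" "closure \<Omega> \<times> {t0..} \<subseteq> U"
    and smooth: "smooth_on U (\<lambda>z. w (fst z) (snd z))" "smooth_on U (\<lambda>z. u (fst z) (snd z))"
      "smooth_on U (\<lambda>z. q (fst z) (snd z))" "smooth_on U (\<lambda>z. g (fst z) (snd z))"
    and evol: "\<forall>t\<ge>t0. \<forall>x\<in>\<Omega>. tderiv w x t =
        g x t - advect (\<lambda>y. u y t) (\<lambda>y. u y t) x - grad (\<lambda>y. q y t) x + \<nu> *\<^sub>R lap (\<lambda>y. w y t) x"
    and w_bc: "\<forall>t\<ge>t0. \<forall>x\<in>frontier \<Omega>. (\<forall>\<tau>. \<tau> \<bullet> n x = 0 \<longrightarrow> w x t \<bullet> \<tau> = 0) \<and> dvg (\<lambda>y. w y t) x = 0"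
    and proj: "\<forall>t\<ge>t0. leray_proj \<Omega> n (\<lambda>y. w y t) (\<lambda>y. u y t)"
    and u_bc: "\<forall>t\<ge>t0. \<forall>x\<in>frontier \<Omega>. u x t \<bullet> n x = 0"
    and q_eq: "\<forall>t\<ge>t0. \<forall>x\<in>\<Omega>. lap (\<lambda>y. q y t) x =
        dvg (\<lambda>y. g y t - advect (\<lambda>z. u z t) (\<lambda>z. u z t) y) x"
    and q_bc: "\<forall>t\<ge>t0. \<forall>x\<in>frontier \<Omega>. n x \<bullet> grad (\<lambda>y. q y t) x =
        n x \<bullet> (g x t - advect (\<lambda>y. u y t) (\<lambda>y. u y t) x + \<nu> *\<^sub>R lap (\<lambda>y. w y t) x) + lam * (n x \<bullet> w x t)"
    and init: "\<forall>x\<in>closure \<Omega>. w x t0 = u x t0"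
  shows "(\<forall>t\<ge>t0. \<forall>x\<in>closure \<Omega>. w x t = u x t) \<and>
         (\<forall>t\<ge>t0. \<forall>x\<in>\<Omega>.
            tderiv u x t + advect (\<lambda>y. u y t) (\<lambda>y. u y t) x =
              g x t - grad (\<lambda>y. q y t) x + \<nu> *\<^sub>R lap (\<lambda>y. u y t) x \<and>
            dvg (\<lambda>y. u y t) x = 0) \<and>
         (\<forall>t\<ge>t0. \<forall>x\<in>frontier \<Omega>. u x t = 0)"
proof -
  interpret gepup_e \<Omega> \<rho> n w u g q \<nu> lam t0 U
    by (intro gepup_e.intro dom normal nu U smooth evol w_bc proj u_bc q_eq q_bc init)
  show ?thesis using w_eq_u navier_stokes dvg_u_zero u_frontier_zero by auto
qed

end
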